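(* Let $\Gamma$ be a negative-definite plumbing forest. There is an isomorphism of abelian groups \[\mathbb{H}(\Gamma;\mathbb{Z})\cong\ker U\subset\mathbb{H}^+(\Gamma).\]
   Context: A plumbing forest $\Gamma$ is a finite forest with integer framings $m(v)$; the lattice $L=H_2(W_\Gamma)\cong\mathbb{Z}^{\text{vertices}}$ of the plumbed 4-manifold carries the intersection form. Characteristic elements $\mathrm{Char}(\Gamma)$ are $k\in\mathrm{Hom}(L,\mathbb{Z})$ with $\langle k,x\rangle\equiv x\cdot x\bmod 2$; $L$ acts by $x\cdot k=k+2x^*$, $x^*=(x,-)$, with orbits $[k_0]$. $\mathbb{H}(\Gamma;\mathbb{Z})$: the free abelian group on $\mathrm{Char}(\Gamma)$ modulo the relations (I) $k\sim0$ if $|\langle k,v\rangle|>-v^2$ for some vertex $v$; (II) $k\sim(-1)^{v^2}(k\mp2v^* )$ if $\langle k,v\rangle=\pm v^2$, where the pairing has $(v,v)=m(v)$ and $(v,w)=-1$ for adjacent $v,w$ (its isomorphism type is unchanged if instead adjacent vertices pair to $+1$ and the sign $(-1)^{v^2}$ is dropped). Némethi's lattice cohomology $\mathbb{H}^+(\Gamma)$: use the pairing with adjacent vertices pairing to $+1$. For $k_0\in\mathrm{Char}(\Gamma)$ define $w(x)=-((x,x)+\langle k_0,x\rangle)/2$ for $x\in L$; for a unit lattice cube $\Box$ in $\mathbb{R}^{|\Gamma|}$ (any dimension, vertices in $L$) set $w(\Box)=\max$ of $w$ over its vertices; let $S_n$ be the union of cubes with $w(\Box)\le n$. Then $\mathbb{H}^+(\Gamma,[k_0])=\bigoplus_n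 H^0(S_n;\mathbb{Z})$, with $U$ acting by the restriction $H^0(S_n)\to H^0(S_{n-1})$ induced by inclusion; it depends only on the orbit $[k_0]$, and $\mathbb{H}^+(\Gamma)=\bigoplus_{[k_0]}\mathbb{H}^+(\Gamma,[k_0])$ over all distinct orbits. *)

theory Defs
  imports "HOL-Analysis.Analysis" "HOL-Algebra.Free_Abelian_Groups"
begin

text \<open>A plumbing forest: vertices form a finite type 'v, E is the (symmetric,
 irreflexive, acyclic) adjacency relation, m the integer framing.\<close>

definition plumbing_forest :: "('v::finite \<Rightarrow> 'v \<Rightarrow> bool) \<Rightarrow> bool" where
  "plumbing_forest E \<longleftrightarrow> (\<forall>v w. E v w \<longleftrightarrow> E w v) \<and> (\<forall>v. \<not> E v v) \<and>
     \<not> (\<exists>xs. 3 \<le> length xs \<and> distinct xs \<and>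
          (\<forall>i<length xs. E (xs ! i) (xs ! (Suc i mod length xs))))"

text \<open>Pairing on L = Z^vertices (or its real extension): (v,v) = m v, adjacent
 vertices pair to s (s = 1 or s = -1), others to 0.\<close>

definition pair :: "'a::comm_ring_1 \<Rightarrow> ('v::finite \<Rightarrow> 'v \<Rightarrow> bool) \<Rightarrow> ('v \<Rightarrow> int)
    \<Rightarrow> ('v \<Rightarrow> 'a) \<Rightarrow> ('v \<Rightarrow> 'a) \<Rightarrow> 'a" where
  "pair s E m x y = (\<Sum>v\<in>UNIV. of_int (m v) * x v * y v)
      + s * (\<Sum>v\<in>UNIV. \<Sum>w\<in>UNIV. if E v w then x v * y w else 0)"

definition neg_definite :: "('v::finite \<Rightarrow> 'v \<Rightarrow> bool) \<Rightarrow> ('v \<Rightarrow> int) \<Rightarrow> bool" where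
  "neg_definite E m \<longleftrightarrow> (\<forall>x::'v \<Rightarrow> real. x \<noteq> (\<lambda>_. 0) \<longrightarrow> pair 1 E m x x < 0)"

definition basis :: "'v \<Rightarrow> 'v \<Rightarrow> int" where
  "basis u = (\<lambda>v. if v = u then 1 else 0)"

text \<open>x^* = (x,-), as an element of Hom(L,Z), represented by its values on the vertex basis.\<close>
definition dualf :: "int \<Rightarrow> ('v::finite \<Rightarrow> 'v \<Rightarrow> bool) \<Rightarrow> ('v \<Rightarrow> int) \<Rightarrow> ('v \<Rightarrow> int) \<Rightarrow> ('v \<Rightarrow> int)" where
  "dualf s E m x = (\<lambda>u. pair s E m x (basis u))"

text \<open>Evaluation <k,x> of k in Hom(L,Z) (given by its values on vertices) at x in L.\<close>
definition evalk :: "('v::finite \<Rightarrow> int) \<Rightarrow> ('v \<Rightarrow> int) \<Rightarrow> int" where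
  "evalk k x = (\<Sum>v\<in>UNIV. k v * x v)"

definition Char :: "int \<Rightarrow> ('v::finite \<Rightarrow> 'v \<Rightarrow> bool) \<Rightarrow> ('v \<Rightarrow> int) \<Rightarrow> ('v \<Rightarrow> int) set" where
  "Char s E m = {k. \<forall>x. evalk k x mod 2 = pair s E m x x mod 2}"

subsection \<open>The group H(Gamma; Z) (convention: adjacent vertices pair to -1)\<close>

definition HRel :: "('v::finite \<Rightarrow> 'v \<Rightarrow> bool) \<Rightarrow> ('v \<Rightarrow> int) \<Rightarrow> (('v \<Rightarrow> int) \<Rightarrow>\<^sub>0 int) set" where
  "HRel E m =
     {frag_of k | k. k \<in> Char (-1) E m \<and> (\<exists>v. \<bar>k v\<bar> > - m v)}
   \<union> {frag_of k - frag_cmul (if even (m v) then 1 else -1)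
          (frag_of (\<lambda>u. k u - 2 * dualf (-1) E m (basis v) u)) | k v.
        k \<in> Char (-1) E m \<and> k v = m v}
   \<union> {frag_of k - frag_cmul (if even (m v) then 1 else -1)
          (frag_of (\<lambda>u. k u + 2 * dualf (-1) E m (basis v) u)) | k v.
        k \<in> Char (-1) E m \<and> k v = - m v}"

definition HGroup :: "('v::finite \<Rightarrow> 'v \<Rightarrow> bool) \<Rightarrow> ('v \<Rightarrow> int) \<Rightarrow> (('v \<Rightarrow> int) \<Rightarrow>\<^sub>0 int) set monoid" where
  "HGroup E m = free_Abelian_group (Char (-1) E m)
      Mod generate (free_Abelian_group (Char (-1) E m)) (HRel E m)"

subsection \<open>Nemethi's lattice cohomology H^+ (adjacent vertices pair to +1)\<close>

definition wt :: "('v::finite \<Rightarrow> 'v \<Rightarrow> bool) \<Rightarrow> ('v \<Rightarrow> int) \<Rightarrow> ('v \<Rightarrow> int) \<Rightarrow> ('v \<Rightarrow> int) \<Rightarrow> int" where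
  "wt E m k0 x = (- (pair 1 E m x x + evalk k0 x)) div 2"

definition cube_pts :: "('v::finite \<Rightarrow> int) \<Rightarrow> 'v set \<Rightarrow> (real^'v) set" where
  "cube_pts a I = {p. \<forall>v. if v \<in> I then of_int (a v) \<le> p $ v \<and> p $ v \<le> of_int (a v) + 1
                         else p $ v = of_int (a v)}"

definition cube_verts :: "('v::finite \<Rightarrow> int) \<Rightarrow> 'v set \<Rightarrow> ('v \<Rightarrow> int) set" where
  "cube_verts a I = {(\<lambda>v. a v + (if v \<in> J then 1 else 0)) | J. J \<subseteq> I}"

definition cube_wt :: "('v::finite \<Rightarrow> 'v \<Rightarrow> bool) \<Rightarrow> ('v \<Rightarrow> int) \<Rightarrow> ('v \<Rightarrow> int) \<Rightarrow> ('v \<Rightarrow> int) \<Rightarrow> 'v set \<Rightarrow> int" where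
  "cube_wt E m k0 a I = Max (wt E m k0 ` cube_verts a I)"

definition Sset :: "('v::finite \<Rightarrow> 'v \<Rightarrow> bool) \<Rightarrow> ('v \<Rightarrow> int) \<Rightarrow> ('v \<Rightarrow> int) \<Rightarrow> int \<Rightarrow> (real^'v) set" where
  "Sset E m k0 n = \<Union> {cube_pts a I | a I. cube_wt E m k0 a I \<le> n}"

text \<open>H^0(S;Z): integer functions on S constant on path components (extended by 0 off S).\<close>
definition H0 :: "(real^'v::finite) set \<Rightarrow> (real^'v \<Rightarrow> int) set" where
  "H0 S = {f. (\<forall>p. p \<notin> S \<longrightarrow> f p = 0) \<and> (\<forall>p q. path_component S p q \<longrightarrow> f p = f q)}"

definition orbit :: "('v::finite \<Rightarrow> 'v \<Rightarrow> bool) \<Rightarrow> ('v \<Rightarrow> int) \<Rightarrow> ('v \<Rightarrow> int) \<Rightarrow> ('v \<Rightarrow> int) set" where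
  "orbit E m k = {(\<lambda>u. k u + 2 * dualf 1 E m x u) | x. True}"

definition Orbits :: "('v::finite \<Rightarrow> 'v \<Rightarrow> bool) \<Rightarrow> ('v \<Rightarrow> int) \<Rightarrow> ('v \<Rightarrow> int) set set" where
  "Orbits E m = orbit E m ` Char 1 E m"

definition rep :: "('v \<Rightarrow> int) set \<Rightarrow> ('v \<Rightarrow> int)" where
  "rep Ob = (SOME k. k \<in> Ob)"

text \<open>H^+(Gamma) = direct sum over orbits [k0] and n in Z of H^0(S_n).\<close>
definition HPlus :: "('v::finite \<Rightarrow> 'v \<Rightarrow> bool) \<Rightarrow> ('v \<Rightarrow> int)
    \<Rightarrow> (('v \<Rightarrow> int) set \<times> int \<Rightarrow> real^'v \<Rightarrow> int) monoid" where
  "HPlus E m = \<lparr>carrier = {F. (\<forall>Ob n. F (Ob, n) \<in> H0 (Sset E m (rep Ob) n))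
                            \<and> (\<forall>Ob n. Ob \<notin> Orbits E m \<longrightarrow> F (Ob, n) = (\<lambda>_. 0))
                            \<and> finite {i. F i \<noteq> (\<lambda>_. 0)}},
                monoid.mult = (\<lambda>F G i p. F i p + G i p),
                one = (\<lambda>i p. 0)\<rparr>"

text \<open>U: H^0(S_{n+1}) -> H^0(S_n), restriction along the inclusion S_n in S_{n+1}.\<close>
definition Umap :: "('v::finite \<Rightarrow> 'v \<Rightarrow> bool) \<Rightarrow> ('v \<Rightarrow> int)
    \<Rightarrow> (('v \<Rightarrow> int) set \<times> int \<Rightarrow> real^'v \<Rightarrow> int) \<Rightarrow> (('v \<Rightarrow> int) set \<times> int \<Rightarrow> real^'v \<Rightarrow> int)" where
  "Umap E m F = (\<lambda>(Ob, n) p. if p \<in> Sset E m (rep Ob) n then F (Ob, n + 1) p else 0)"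

definition KerU :: "('v::finite \<Rightarrow> 'v \<Rightarrow> bool) \<Rightarrow> ('v \<Rightarrow> int)
    \<Rightarrow> (('v \<Rightarrow> int) set \<times> int \<Rightarrow> real^'v \<Rightarrow> int) monoid" where
  "KerU E m = subgroup_generated (HPlus E m) (kernel (HPlus E m) (HPlus E m) (Umap E m))"

end

theory Submission
  imports Defs
begin

text \<open>
  A forest is bipartite, and changing the sign of the coordinates on one colour class identifies
  the convention in which adjacent vertices pair to \<open>-1\<close> with the one in which they pair to \<open>+1\<close>;
  so both sides can be computed in the latter. Fix an orbit \<open>[r]\<close>. By negative definiteness each
  \<open>k\<close> in it is \<open>r + 2x\<^sup>*\<close> for a unique lattice point \<open>x\<close>, and the change of the weight \<open>w\<close> along a unit
  step from \<open>x\<close> is read off from \<open>k\<close>: relation (II) is exactly the case of a step of constant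
  weight, relation (I) the case of a step to a smaller weight. Hence \<open>\<bbbH>(\<Gamma>;\<int>)\<close> is free on the
  components of the sublevel graphs \<open>{w \<le> n}\<close> (lattice points joined by unit steps) on which \<open>w\<close>
  attains its minimum \<open>n\<close>. On the other side, \<open>S\<^sub>n\<close> is a finite union of convex cubes, finite
  again by negative definiteness, so its path components are those of the sublevel graph; a class
  in \<open>H\<^sup>0(S\<^sub>n)\<close> lies in \<open>ker U\<close> iff it vanishes on the components meeting \<open>S\<^sub>n\<^sub>-\<^sub>1\<close>, which are
  exactly the non-minimal ones. So \<open>ker U\<close> is free on the same set, via indicator functions.
\<close>

section \<open>Forests are bipartite\<close>

definition simple_path_in :: "('v \<Rightarrow> 'v \<Rightarrow> bool) \<Rightarrow> 'v set \<Rightarrow> 'v list \<Rightarrow> bool" where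
  "simple_path_in E A xs \<longleftrightarrow> xs \<noteq> [] \<and> set xs \<subseteq> A \<and> distinct xs \<and>
     (\<forall>i. Suc i < length xs \<longrightarrow> E (xs ! i) (xs ! Suc i))"

lemma simple_path_in_snoc:
  assumes "simple_path_in E A xs" "y \<in> A" "y \<notin> set xs" "E (last xs) y"
  shows "simple_path_in E A (xs @ [y])"
  unfolding simple_path_in_def
proof (intro conjI allI impI)
  fix i assume i: "Suc i < length (xs @ [y])"
  show "E ((xs @ [y]) ! i) ((xs @ [y]) ! Suc i)"
  proof (cases "Suc i < length xs")
    case True
    then show ?thesis using assms(1) by (simp add: simple_path_in_def nth_append)
  next
    case False
    then have "i = length xs - 1" "xs \<noteq> []" using i assms(1) by (auto simp: simple_path_in_def)
    then show ?thesis using assms(4) by (simp add: nth_append last_conv_nth)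
  qed
qed (use assms in \<open>auto simp: simple_path_in_def\<close>)

lemma plumbing_forest_no_chord:
  assumes F: "plumbing_forest E" and P: "simple_path_in E A xs"
    and i: "i + 3 \<le> length xs" and chord: "E (last xs) (xs ! i)"
  shows False
proof -
  define ys where "ys = drop i xs"
  have len: "length ys = length xs - i" by (simp add: ys_def)
  have "\<forall>j<length ys. E (ys ! j) (ys ! (Suc j mod length ys))"
  proof (intro allI impI)
    fix j assume j: "j < length ys"
    show "E (ys ! j) (ys ! (Suc j mod length ys))"
    proof (cases "Suc j < length ys")
      case True
      then show ?thesis using P len i unfolding simple_path_in_def ys_def by (auto simp: add.commute)
    next
      case False
      then have "Suc j = length ys" using j by simp
      then have "i + j = length xs - 1" "xs \<noteq> []" using len i by auto
      then have "ys ! j = last xs" "ys ! (Suc j mod length ys) = xs ! i"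
        using len i \<open>Suc j = length ys\<close> by (auto simp: ys_def last_conv_nth)
      then show ?thesis using chord by simp
    qed
  qed
  moreover have "3 \<le> length ys" "distinct ys" using len i P by (auto simp: ys_def simple_path_in_def)
  ultimately show False using F unfolding plumbing_forest_def by blast
qed

text \<open>The last vertex of a longest simple path in \<open>A\<close> is a leaf of the subgraph induced on \<open>A\<close>.\<close>

lemma plumbing_forest_has_leaf:
  fixes E :: "'v::finite \<Rightarrow> 'v \<Rightarrow> bool"
  assumes F: "plumbing_forest E" and A: "A \<noteq> {}"
  shows "\<exists>z\<in>A. \<exists>u. \<forall>y\<in>A. E z y \<longrightarrow> y = u"
proof -
  have irr: "\<not> E a a" for a using F unfolding plumbing_forest_def by auto
  from A obtain a where a: "a \<in> A" by blast
  have "simple_path_in E A [a]" using a by (simp add: simple_path_in_def)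
  moreover have "length xs < card A + 1" if "simple_path_in E A xs" for xs
    using that card_mono[of A "set xs"] distinct_card[of xs] by (auto simp: simple_path_in_def)
  ultimately obtain xs where P: "simple_path_in E A xs"
    and longest: "\<And>ys. simple_path_in E A ys \<Longrightarrow> length ys \<le> length xs"
    using ex_has_greatest_nat[of "simple_path_in E A" "[a]" length] by blast
  define L where "L = length xs"
  have L: "L \<ge> 1" "last xs = xs ! (L - 1)" "last xs \<in> A"
    using P by (auto simp: simple_path_in_def L_def last_conv_nth Suc_le_eq)
  have "y = xs ! (L - 2)" if y: "y \<in> A" "E (last xs) y" for y
  proof -
    have "y \<in> set xs"
      using longest[OF simple_path_in_snoc[OF P y(1) _ y(2)]] by (auto simp: L_def)
    then obtain i where i: "i < L" "y = xs ! i" by (auto simp: in_set_conv_nth L_def)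
    have "i \<noteq> L - 1" using i L y(2) irr by auto
    moreover have "\<not> i + 3 \<le> L" using plumbing_forest_no_chord[OF F P] i y(2) by (auto simp: L_def)
    ultimately show ?thesis using i by (cases "i = L - 2") auto
  qed
  then show ?thesis using L(3) by blast
qed

lemma plumbing_forest_bipartite:
  fixes E :: "'v::finite \<Rightarrow> 'v \<Rightarrow> bool"
  assumes F: "plumbing_forest E"
  shows "\<exists>c::'v \<Rightarrow> bool. \<forall>a b. E a b \<longrightarrow> c a \<noteq> c b"
proof -
  have irr: "\<not> E a a" and sym: "E a b \<longleftrightarrow> E b a" for a b
    using F unfolding plumbing_forest_def by auto
  have "\<exists>c::'v \<Rightarrow> bool. \<forall>a\<in>B. \<forall>b\<in>B. E a b \<longrightarrow> c a \<noteq> c b" if "finite B" for B :: "'v set"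
    using that
  proof (induction B rule: finite_remove_induct)
    case (remove A)
    obtain z u where z: "z \<in> A" and leaf: "\<forall>y\<in>A. E z y \<longrightarrow> y = u"
      using plumbing_forest_has_leaf[OF F remove(2)] by blast
    obtain c :: "'v \<Rightarrow> bool" where c: "\<forall>a\<in>A - {z}. \<forall>b\<in>A - {z}. E a b \<longrightarrow> c a \<noteq> c b"
      using remove(4)[OF z] by blast
    have "(c(z := \<not> c u)) a \<noteq> (c(z := \<not> c u)) b" if "a \<in> A" "b \<in> A" "E a b" for a b
    proof (cases "a = z \<or> b = z")
      case True
      then have "a = z \<and> b = u \<or> a = u \<and> b = z" using leaf that sym by blast
      then show ?thesis using that irr by auto
    qed (use c that in auto)
    then show ?case by blast
  qed simp_all
  from this[of UNIV] show ?thesis by simp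
qed


section \<open>The pairing, duals and characteristic elements\<close>

lemma sum_mult_basis:
  fixes u :: "'v::finite"
  shows "(\<Sum>w\<in>UNIV. f w * basis u w) = (f u :: int)"
proof -
  have "(\<Sum>w\<in>UNIV. f w * basis u w) = (\<Sum>w\<in>UNIV. if w = u then f u else 0)"
    by (rule sum.cong) (auto simp: basis_def)
  then show ?thesis by simp
qed

lemma pair_add_left: "pair s E m (\<lambda>v. x v + y v) z = pair s E m x z + pair s E m y z"
  unfolding pair_def by (simp add: algebra_simps sum.distrib if_distrib sum.If_cases)

lemma pair_add_right: "pair s E m z (\<lambda>v. x v + y v) = pair s E m z x + pair s E m z y"
  unfolding pair_def by (simp add: algebra_simps sum.distrib if_distrib sum.If_cases)

lemma pair_cmult_left: "pair s E m (\<lambda>v. c * x v) z = c * pair s E m x z"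
  unfolding pair_def by (simp add: algebra_simps sum_distrib_left if_distrib sum.If_cases)

lemma pair_commute:
  assumes "\<And>v w. E v w \<longleftrightarrow> E w v"
  shows "pair s E m x y = pair s E m y x"
proof -
  have "(\<Sum>v\<in>UNIV. \<Sum>w\<in>UNIV. if E v w then x v * y w else 0)
      = (\<Sum>w\<in>UNIV. \<Sum>v\<in>UNIV. if E v w then x v * y w else 0)"
    by (rule sum.swap)
  also have "\<dots> = (\<Sum>v\<in>UNIV. \<Sum>w\<in>UNIV. if E v w then y v * x w else 0)"
    using assms by (intro sum.cong refl) (simp add: mult.commute)
  finally show ?thesis unfolding pair_def by (simp add: mult.commute mult.left_commute)
qed

lemma pair_of_int:
  "pair (of_int s) E m (\<lambda>v. of_int (x v)) (\<lambda>v. of_int (y v)) = (of_int (pair s E m x y) :: 'a::comm_ring_1)"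
  by (simp add: pair_def if_distrib cong: if_cong)

lemma dualf_eq: "dualf s E m x u = m u * x u + s * (\<Sum>v\<in>UNIV. if E v u then x v else 0)"
proof -
  have "(\<Sum>w\<in>UNIV. if E v w then x v * basis u w else 0) = (if E v u then x v else 0)" for v
  proof -
    have "(\<Sum>w\<in>UNIV. if E v w then x v * basis u w else 0)
        = (\<Sum>w\<in>UNIV. (if E v w then x v else 0) * basis u w)"
      by (rule sum.cong) auto
    then show ?thesis using sum_mult_basis[of "\<lambda>w. if E v w then x v else 0" u] by simp
  qed
  moreover have "(\<Sum>v\<in>UNIV. of_int (m v) * x v * basis u v) = m u * x u"
    using sum_mult_basis[of "\<lambda>v. m v * x v" u] by simp
  ultimately show ?thesis unfolding dualf_def pair_def by (simp only:)
qed

lemma dualf_add: "dualf s E m (\<lambda>v. x v + y v) = (\<lambda>u. dualf s E m x u + dualf s E m y u)"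
  by (simp add: dualf_def pair_add_left)

lemma dualf_cmult: "dualf s E m (\<lambda>v. c * x v) = (\<lambda>u. c * dualf s E m x u)"
  by (simp add: dualf_def pair_cmult_left)

lemma dualf_basis: "dualf s E m (basis v) u = (if u = v then m v else 0) + (if E v u then s else 0)"
proof -
  have "(\<Sum>w\<in>UNIV. if E w u then basis v w else 0) = (\<Sum>w\<in>UNIV. (if E w u then 1 else 0) * basis v w)"
    by (rule sum.cong) auto
  then have "dualf s E m (basis v) u = m u * basis v u + s * (\<Sum>w\<in>UNIV. (if E w u then 1 else 0) * basis v w)"
    unfolding dualf_eq by simp
  also have "\<dots> = (if u = v then m v else 0) + (if E v u then s else 0)"
    by (simp add: sum_mult_basis) (simp add: basis_def)
  finally show ?thesis .
qed

lemma evalk_dualf: "evalk (dualf s E m x) y = pair s E m x y"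
proof -
  have "evalk (dualf s E m x) y = (\<Sum>u\<in>UNIV. m u * x u * y u)
      + s * (\<Sum>u\<in>UNIV. \<Sum>v\<in>UNIV. if E v u then x v * y u else 0)"
    unfolding evalk_def dualf_eq
    by (simp add: algebra_simps sum.distrib sum_distrib_left sum_distrib_right if_distrib cong: if_cong)
  also have "(\<Sum>u\<in>UNIV. \<Sum>v\<in>UNIV. if E v u then x v * y u else 0)
      = (\<Sum>v\<in>UNIV. \<Sum>u\<in>UNIV. if E v u then x v * y u else 0)"
    by (rule sum.swap)
  finally show ?thesis unfolding pair_def by simp
qed

lemma evalk_add_left: "evalk (\<lambda>v. k v + l v) x = evalk k x + evalk l x"
  by (simp add: evalk_def algebra_simps sum.distrib)

lemma evalk_add_right: "evalk k (\<lambda>v. x v + y v) = evalk k x + evalk k y"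
  by (simp add: evalk_def algebra_simps sum.distrib)

lemma evalk_cmult_left: "evalk (\<lambda>v. c * k v) x = c * evalk k x"
  by (simp add: evalk_def algebra_simps sum_distrib_left)

lemma evalk_basis: "evalk k (basis v) = k v"
  by (simp add: evalk_def sum_mult_basis)

lemma Char_add_dualf: "k \<in> Char s E m \<Longrightarrow> (\<lambda>u. k u + 2 * dualf s E m x u) \<in> Char s E m"
  unfolding Char_def by (auto simp: evalk_add_left evalk_cmult_left evalk_dualf)

lemma Char_diff_dualf: "k \<in> Char s E m \<Longrightarrow> (\<lambda>u. k u - 2 * dualf s E m x u) \<in> Char s E m"
  using Char_add_dualf[of k s E m "\<lambda>u. - x u"] dualf_cmult[of s E m "-1" x] by simp

lemma Char_even: "k \<in> Char s E m \<Longrightarrow> even (pair s E m x x + evalk k x)"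
proof -
  assume "k \<in> Char s E m"
  then have "evalk k x mod 2 = pair s E m x x mod 2" unfolding Char_def by blast
  then show ?thesis
    by (metis dvd_add_triv_right_iff even_add mod_mod_trivial mod_eq_dvd_iff even_iff_mod_2_eq_zero)
qed

lemma wt_double: "k \<in> Char 1 E m \<Longrightarrow> 2 * wt E m k x = - (pair 1 E m x x + evalk k x)"
  unfolding wt_def using Char_even[of k 1 E m x] by (metis dvd_minus_iff dvd_mult_div_cancel)

section \<open>Orbits, weights and the lattice graph\<close>

locale plumbing =
  fixes E :: "'v::finite \<Rightarrow> 'v \<Rightarrow> bool" and m :: "'v \<Rightarrow> int"
begin

definition shift :: "('v \<Rightarrow> int) \<Rightarrow> ('v \<Rightarrow> int) \<Rightarrow> ('v \<Rightarrow> int)" where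
  "shift r x = (\<lambda>u. r u + 2 * dualf 1 E m x u)"

lemma Char_shift: "r \<in> Char 1 E m \<Longrightarrow> shift r x \<in> Char 1 E m"
  unfolding shift_def by (rule Char_add_dualf)

lemma shift_shift: "shift (shift r x) y = shift r (\<lambda>u. x u + y u)"
  by (simp add: shift_def dualf_add algebra_simps)

lemma shift_zero: "shift r (\<lambda>_. 0) = r"
  using dualf_cmult[of 1 E m 0 "\<lambda>_. 0"] by (simp add: shift_def)

lemma orbit_eq_range_shift: "orbit E m k = range (shift k)"
  by (auto simp: orbit_def shift_def)

lemma in_orbit_self: "k \<in> orbit E m k"
  using shift_zero[of k] unfolding orbit_eq_range_shift by (metis rangeI)

lemma orbit_shift: "orbit E m (shift r x) = orbit E m r"
proof -
  have "shift (shift r x) y \<in> range (shift r)" for y by (simp add: shift_shift)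
  moreover have "shift r y \<in> range (shift (shift r x))" for y
  proof -
    have "shift r y = shift (shift r x) (\<lambda>u. y u - x u)" by (simp add: shift_shift)
    then show ?thesis by simp
  qed
  ultimately show ?thesis by (auto simp: orbit_eq_range_shift)
qed

lemma rep_orbit_in_orbit: "rep (orbit E m k) \<in> orbit E m k"
  unfolding rep_def using in_orbit_self by (metis someI_ex)

lemma Char_rep_orbit: "k \<in> Char 1 E m \<Longrightarrow> rep (orbit E m k) \<in> Char 1 E m"
  using rep_orbit_in_orbit[of k] Char_shift by (auto simp: orbit_eq_range_shift)

lemma Char_rep_Orbits: "Ob \<in> Orbits E m \<Longrightarrow> rep Ob \<in> Char 1 E m"
  unfolding Orbits_def using Char_rep_orbit by blast

definition incr :: "('v \<Rightarrow> int) \<Rightarrow> 'v \<Rightarrow> ('v \<Rightarrow> int)" where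
  "incr x v = (\<lambda>u. x u + basis v u)"

definition decr :: "('v \<Rightarrow> int) \<Rightarrow> 'v \<Rightarrow> ('v \<Rightarrow> int)" where
  "decr x v = (\<lambda>u. x u - basis v u)"

lemma incr_decr [simp]: "incr (decr x v) v = x"
  by (simp add: incr_def decr_def)

lemma shift_incr: "shift r (incr x v) = (\<lambda>u. shift r x u + 2 * dualf 1 E m (basis v) u)"
  by (simp add: shift_def incr_def dualf_add algebra_simps)

lemma shift_decr: "shift r (decr x v) = (\<lambda>u. shift r x u - 2 * dualf 1 E m (basis v) u)"
  using shift_incr[of r "decr x v" v] by (simp add: fun_eq_iff)

text \<open>The sign \<open>(-1)^(v\<cdot>v)\<close> of relation (II), and \<open>(-1)^(x\<cdot>x)\<close> for a lattice point \<open>x\<close>, using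
  \<open>x\<cdot>x \<equiv> \<langle>m,x\<rangle> mod 2\<close>.\<close>

definition frame_sign :: "'v \<Rightarrow> int" where
  "frame_sign v = (if even (m v) then 1 else -1)"

definition point_sign :: "('v \<Rightarrow> int) \<Rightarrow> int" where
  "point_sign x = (if even (evalk m x) then 1 else -1)"

lemma point_sign_incr: "point_sign (incr x v) = point_sign x * frame_sign v"
  by (simp add: point_sign_def frame_sign_def incr_def evalk_add_right evalk_basis)

lemma point_sign_square [simp]: "point_sign x * point_sign x = 1"
  by (simp add: point_sign_def)

definition lattice_adj :: "('v \<Rightarrow> int) \<Rightarrow> ('v \<Rightarrow> int) \<Rightarrow> bool" where
  "lattice_adj x y \<longleftrightarrow> (\<exists>v. y = incr x v \<or> x = incr y v)"

definition level_edge :: "('v \<Rightarrow> int) \<Rightarrow> int \<Rightarrow> ('v \<Rightarrow> int) \<Rightarrow> ('v \<Rightarrow> int) \<Rightarrow> bool" where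
  "level_edge r n x y \<longleftrightarrow> lattice_adj x y \<and> wt E m r x \<le> n \<and> wt E m r y \<le> n"

definition level_conn :: "('v \<Rightarrow> int) \<Rightarrow> int \<Rightarrow> ('v \<Rightarrow> int) \<Rightarrow> ('v \<Rightarrow> int) \<Rightarrow> bool" where
  "level_conn r n = (level_edge r n)\<^sup>*\<^sup>*"

definition level_component :: "('v \<Rightarrow> int) \<Rightarrow> int \<Rightarrow> ('v \<Rightarrow> int) \<Rightarrow> ('v \<Rightarrow> int) set" where
  "level_component r n x = {y. level_conn r n x y}"

definition component_min :: "('v \<Rightarrow> int) \<Rightarrow> ('v \<Rightarrow> int) \<Rightarrow> bool" where
  "component_min r x \<longleftrightarrow> (\<forall>y. level_conn r (wt E m r x) x y \<longrightarrow> wt E m r x \<le> wt E m r y)"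

definition flat_conn :: "('v \<Rightarrow> int) \<Rightarrow> int \<Rightarrow> ('v \<Rightarrow> int) \<Rightarrow> ('v \<Rightarrow> int) \<Rightarrow> bool" where
  "flat_conn r n = (\<lambda>y z. lattice_adj y z \<and> wt E m r y = n \<and> wt E m r z = n)\<^sup>*\<^sup>*"

lemma lattice_adj_sym: "lattice_adj x y \<Longrightarrow> lattice_adj y x"
  by (auto simp: lattice_adj_def)

lemma lattice_adj_incr: "lattice_adj x (incr x v)"
  by (auto simp: lattice_adj_def)

lemma lattice_adj_decr: "lattice_adj x (decr x v)"
  by (auto simp: lattice_adj_def intro: exI[of _ v])

lemma level_conn_refl: "level_conn r n x x"
  by (simp add: level_conn_def)

lemma level_conn_trans: "level_conn r n x y \<Longrightarrow> level_conn r n y z \<Longrightarrow> level_conn r n x z"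
  unfolding level_conn_def by simp

lemma level_conn_sym: "level_conn r n x y \<Longrightarrow> level_conn r n y x"
  unfolding level_conn_def
proof (induction rule: rtranclp_induct)
  case (step y z)
  then have "level_edge r n z y" by (auto simp: level_edge_def lattice_adj_sym)
  then show ?case using step(3) by (meson converse_rtranclp_into_rtranclp)
qed simp

lemma level_conn_edge: "lattice_adj x y \<Longrightarrow> wt E m r y \<le> wt E m r x \<Longrightarrow> level_conn r (wt E m r x) x y"
  unfolding level_conn_def by (rule r_into_rtranclp) (simp add: level_edge_def)

lemma level_conn_wt_le: "level_conn r n x y \<Longrightarrow> wt E m r x \<le> n \<Longrightarrow> wt E m r y \<le> n"
  unfolding level_conn_def by (induction rule: rtranclp_induct) (auto simp: level_edge_def)

lemma component_min_wt:
  "component_min r x \<Longrightarrow> level_conn r (wt E m r x) x y \<Longrightarrow> wt E m r y = wt E m r x"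
  using level_conn_wt_le[of r "wt E m r x" x y] unfolding component_min_def by force

lemma component_min_level_conn:
  assumes min: "component_min r x" and conn: "level_conn r (wt E m r x) x y"
  shows "component_min r y" "wt E m r y = wt E m r x"
    "level_component r (wt E m r y) y = level_component r (wt E m r x) x"
proof -
  show w: "wt E m r y = wt E m r x" by (rule component_min_wt[OF min conn])
  show "component_min r y" unfolding component_min_def w
  proof (intro allI impI)
    fix z assume "level_conn r (wt E m r x) y z"
    then have "level_conn r (wt E m r x) x z" using conn level_conn_trans by blast
    then show "wt E m r x \<le> wt E m r z" using min unfolding component_min_def by blast
  qed
  show "level_component r (wt E m r y) y = level_component r (wt E m r x) x"
    unfolding w level_component_def using conn level_conn_sym level_conn_trans by blast
qed

lemma flat_conn_wt: "flat_conn r n x y \<Longrightarrow> wt E m r x = n \<Longrightarrow> wt E m r y = n"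
  unfolding flat_conn_def by (induction rule: rtranclp_induct) auto

lemma flat_conn_step:
  "flat_conn r n x y \<Longrightarrow> lattice_adj y z \<Longrightarrow> wt E m r y = n \<Longrightarrow> wt E m r z = n \<Longrightarrow> flat_conn r n x z"
  unfolding flat_conn_def by (rule rtranclp.rtrancl_into_rtrancl) auto

lemma component_min_flat_conn:
  assumes min: "component_min r x" and conn: "level_conn r (wt E m r x) x y"
  shows "flat_conn r (wt E m r x) x y"
  using conn unfolding level_conn_def
proof (induction rule: rtranclp_induct)
  case base
  show ?case by (simp add: flat_conn_def)
next
  case (step y z)
  have "level_conn r (wt E m r x) x y" "level_conn r (wt E m r x) x z"
    using step(1,2) unfolding level_conn_def by auto
  then have "wt E m r y = wt E m r x" "wt E m r z = wt E m r x"
    using component_min_wt[OF min] by auto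
  moreover have "lattice_adj y z" using step(2) by (simp add: level_edge_def)
  ultimately show ?case using step(3) flat_conn_step by blast
qed

lemma level_conn_flat_or_descends:
  assumes "level_conn r n x y" "wt E m r x = n"
  shows "flat_conn r n x y \<or> (\<exists>y' z. flat_conn r n x y' \<and> lattice_adj y' z \<and> wt E m r z < n)"
  using assms(1) unfolding level_conn_def
proof (induction rule: rtranclp_induct)
  case base
  show ?case by (simp add: flat_conn_def)
next
  case (step y z)
  show ?case
  proof (cases "flat_conn r n x y")
    case True
    then have wy: "wt E m r y = n" using flat_conn_wt assms(2) by blast
    have adj: "lattice_adj y z" and wz: "wt E m r z \<le> n" using step(2) by (auto simp: level_edge_def)
    show ?thesis
    proof (cases "wt E m r z = n")
      case True
      then show ?thesis using flat_conn_step[OF \<open>flat_conn r n x y\<close> adj wy] by blast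
    next
      case False
      then show ?thesis using \<open>flat_conn r n x y\<close> adj wz by force
    qed
  next
    case False
    then show ?thesis using step(3) by blast
  qed
qed

end

section \<open>Sublevel graphs and the cubical sets \<open>S\<^sub>n\<close>\<close>

context plumbing
begin

definition lattice_vec :: "('v \<Rightarrow> int) \<Rightarrow> real^'v" where
  "lattice_vec x = (\<chi> v. real_of_int (x v))"

definition lattice_floor :: "real^'v \<Rightarrow> ('v \<Rightarrow> int)" where
  "lattice_floor p = (\<lambda>v. \<lfloor>p $ v\<rfloor>)"

definition cube_vertex :: "('v \<Rightarrow> int) \<Rightarrow> 'v set \<Rightarrow> ('v \<Rightarrow> int)" where
  "cube_vertex a J = (\<lambda>v. a v + (if v \<in> J then 1 else 0))"

lemma lattice_floor_vec [simp]: "lattice_floor (lattice_vec x) = x"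
  by (simp add: lattice_floor_def lattice_vec_def)

lemma cube_verts_eq: "cube_verts a I = cube_vertex a ` Pow I"
  by (auto simp: cube_verts_def cube_vertex_def)

lemma finite_cube_verts:
  fixes a :: "'v \<Rightarrow> int"
  shows "finite (cube_verts a I)"
  by (simp add: cube_verts_eq)

lemma base_in_cube_verts:
  fixes a :: "'v \<Rightarrow> int"
  shows "a \<in> cube_verts a I"
  unfolding cube_verts_eq by (rule image_eqI[of _ _ "{}"]) (auto simp: cube_vertex_def)

lemma cube_vertex_insert: "j \<notin> J \<Longrightarrow> cube_vertex a (insert j J) = incr (cube_vertex a J) j"
  by (auto simp: cube_vertex_def incr_def basis_def fun_eq_iff)

lemma cube_verts_singleton:
  fixes x :: "'v \<Rightarrow> int"
  shows "cube_verts x {v} = {x, incr x v}"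
proof -
  have "Pow {v} = {{}, {v}}" by auto
  moreover have "cube_vertex x {} = x" "cube_vertex x {v} = incr x v"
    by (auto simp: cube_vertex_def incr_def basis_def fun_eq_iff)
  ultimately show ?thesis unfolding cube_verts_eq by simp
qed

lemma cube_wt_le_iff: "cube_wt E m r a I \<le> n \<longleftrightarrow> (\<forall>y\<in>cube_verts a I. wt E m r y \<le> n)"
  using finite_cube_verts[of a I] base_in_cube_verts[of a I] unfolding cube_wt_def by (subst Max_le_iff) auto

lemma mem_Sset_iff: "p \<in> Sset E m r n \<longleftrightarrow> (\<exists>a I. cube_wt E m r a I \<le> n \<and> p \<in> cube_pts a I)"
  unfolding Sset_def by blast

lemma cube_pts_eq_cbox: "cube_pts a I = cbox (lattice_vec a) (lattice_vec (cube_vertex a I))"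
  by (auto simp: cube_pts_def mem_box_cart lattice_vec_def cube_vertex_def split: if_splits)

lemma closed_cube_pts:
  fixes a :: "'v \<Rightarrow> int"
  shows "closed (cube_pts a I)"
  unfolding cube_pts_eq_cbox by (rule closed_cbox)

lemma lattice_vec_in_cube_pts:
  fixes a :: "'v \<Rightarrow> int"
  shows "y \<in> cube_verts a I \<Longrightarrow> lattice_vec y \<in> cube_pts a I"
  unfolding cube_verts_eq by (auto simp: cube_pts_def lattice_vec_def cube_vertex_def)

lemma lattice_floor_in_cube_verts:
  assumes "p \<in> cube_pts a I"
  shows "lattice_floor p \<in> cube_verts a I"
proof -
  define J where "J = {v\<in>I. \<lfloor>p $ v\<rfloor> = a v + 1}"
  have "lattice_floor p v = cube_vertex a J v" for v
  proof (cases "v \<in> I")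
    case True
    then have "of_int (a v) \<le> p $ v" "p $ v \<le> of_int (a v) + 1"
      using assms by (auto simp: cube_pts_def split: if_splits)
    then have "\<lfloor>p $ v\<rfloor> = a v \<or> \<lfloor>p $ v\<rfloor> = a v + 1" by linarith
    then show ?thesis using True by (auto simp: lattice_floor_def cube_vertex_def J_def)
  next
    case False
    then have "p $ v = of_int (a v)" using assms by (auto simp: cube_pts_def split: if_splits)
    then show ?thesis using False by (auto simp: lattice_floor_def cube_vertex_def J_def)
  qed
  then show ?thesis unfolding cube_verts_eq J_def by blast
qed

lemma level_conn_cube_verts:
  assumes w: "cube_wt E m r a I \<le> n" and y: "y \<in> cube_verts a I"
  shows "level_conn r n a y"
proof -
  have "level_conn r n a (cube_vertex a J)" if "J \<subseteq> I" for J
  proof -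
    have "finite J" by simp
    then show ?thesis using that
    proof (induction J rule: finite_induct)
      case empty
      then show ?case by (simp add: cube_vertex_def level_conn_refl)
    next
      case (insert j J)
      have "cube_vertex a J \<in> cube_verts a I" "cube_vertex a (insert j J) \<in> cube_verts a I"
        using insert.prems unfolding cube_verts_eq by auto
      then have "level_edge r n (cube_vertex a J) (cube_vertex a (insert j J))"
        using w lattice_adj_incr unfolding level_edge_def cube_vertex_insert[OF insert.hyps(2)] cube_wt_le_iff
        by blast
      then show ?case
        using insert level_conn_def by (metis insert_subset rtranclp.rtrancl_into_rtrancl)
    qed
  qed
  then show ?thesis using y unfolding cube_verts_eq by blast
qed

lemma path_component_cube_pts:
  assumes w: "cube_wt E m r a I \<le> n" and p: "p \<in> cube_pts a I" and q: "q \<in> cube_pts a I"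
  shows "path_component (Sset E m r n) p q"
proof -
  have "path_connected (cube_pts a I)"
    unfolding cube_pts_eq_cbox by (rule convex_imp_path_connected) (rule convex_box)
  then have "path_component (cube_pts a I) p q" using p q path_connected_component by blast
  moreover have "cube_pts a I \<subseteq> Sset E m r n" using w mem_Sset_iff by blast
  ultimately show ?thesis using path_component_of_subset by blast
qed

lemma path_component_lattice_floor:
  "p \<in> Sset E m r n \<Longrightarrow> path_component (Sset E m r n) p (lattice_vec (lattice_floor p))"
  unfolding mem_Sset_iff
  using path_component_cube_pts lattice_floor_in_cube_verts lattice_vec_in_cube_pts by blast

lemma wt_lattice_floor_le: "p \<in> Sset E m r n \<Longrightarrow> wt E m r (lattice_floor p) \<le> n"
  unfolding mem_Sset_iff using lattice_floor_in_cube_verts cube_wt_le_iff by blast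

lemma lattice_vec_in_Sset: "wt E m r x \<le> n \<Longrightarrow> lattice_vec x \<in> Sset E m r n"
  using cube_wt_le_iff[of r x "{}" n] lattice_vec_in_cube_pts[OF base_in_cube_verts, of x "{}"]
  unfolding mem_Sset_iff by (auto simp: cube_verts_def)

lemma path_component_lattice_edge:
  assumes "level_edge r n x y"
  shows "path_component (Sset E m r n) (lattice_vec x) (lattice_vec y)"
proof -
  obtain v where wx: "wt E m r x \<le> n" and wy: "wt E m r y \<le> n" and e: "y = incr x v \<or> x = incr y v"
    using assms unfolding level_edge_def lattice_adj_def by blast
  have "\<exists>a. cube_verts a {v} = {x, y}"
    using e cube_verts_singleton[of x v] cube_verts_singleton[of y v] by (auto simp: insert_commute)
  then obtain a where a: "cube_verts a {v} = {x, y}" by blast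
  have "cube_wt E m r a {v} \<le> n" using a wx wy cube_wt_le_iff by simp
  moreover have "lattice_vec x \<in> cube_pts a {v}" "lattice_vec y \<in> cube_pts a {v}"
    using a lattice_vec_in_cube_pts[of _ a "{v}"] by auto
  ultimately show ?thesis by (rule path_component_cube_pts)
qed

lemma level_conn_imp_path_component:
  assumes "level_conn r n x y" and "wt E m r x \<le> n"
  shows "path_component (Sset E m r n) (lattice_vec x) (lattice_vec y)"
  using assms(1) unfolding level_conn_def
proof (induction rule: rtranclp_induct)
  case base
  then show ?case using lattice_vec_in_Sset[OF assms(2)] by (simp add: path_component_refl)
next
  case (step y z)
  then show ?case using path_component_lattice_edge path_component_trans by blast
qed

lemma closed_Union_cubes:
  assumes "finite {x. wt E m r x \<le> n}"
  shows "closed (\<Union> {cube_pts a I | a I. cube_wt E m r a I \<le> n \<and> P a})"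
proof -
  have "{cube_pts a I | a I. cube_wt E m r a I \<le> n \<and> P a}
      \<subseteq> (\<lambda>(a, I). cube_pts a I) ` ({x. wt E m r x \<le> n} \<times> UNIV)"
  proof
    fix S assume "S \<in> {cube_pts a I | a I. cube_wt E m r a I \<le> n \<and> P a}"
    then obtain a I where S: "S = cube_pts a I" and "cube_wt E m r a I \<le> n" by blast
    then have "wt E m r a \<le> n" using cube_wt_le_iff base_in_cube_verts by blast
    then show "S \<in> (\<lambda>(a, I). cube_pts a I) ` ({x. wt E m r x \<le> n} \<times> UNIV)" using S by force
  qed
  moreover have "finite ({x. wt E m r x \<le> n} \<times> (UNIV :: 'v set set))" using assms by simp
  ultimately have "finite {cube_pts a I | a I. cube_wt E m r a I \<le> n \<and> P a}"
    using finite_subset by blast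
  then show ?thesis by (rule closed_Union) (auto intro: closed_cube_pts)
qed

text \<open>The cubes based in a component of the sublevel graph and those based outside it form two
  disjoint closed sets covering \<open>S\<^sub>n\<close>.\<close>

lemma path_component_imp_level_conn:
  assumes fin: "finite {x. wt E m r x \<le> n}" and pc: "path_component (Sset E m r n) p q"
  shows "level_conn r n (lattice_floor p) (lattice_floor q)"
proof -
  define K where "K = level_component r n (lattice_floor p)"
  define A where "A = \<Union> {cube_pts a I | a I. cube_wt E m r a I \<le> n \<and> a \<in> K}"
  define B where "B = \<Union> {cube_pts a I | a I. cube_wt E m r a I \<le> n \<and> a \<notin> K}"
  have closed: "closed A" "closed B" unfolding A_def B_def by (intro closed_Union_cubes[OF fin])+
  have cover: "Sset E m r n \<subseteq> A \<union> B"
  proof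
    fix z assume "z \<in> Sset E m r n"
    then obtain a I where "cube_wt E m r a I \<le> n" "z \<in> cube_pts a I" using mem_Sset_iff by blast
    then show "z \<in> A \<union> B" unfolding A_def B_def by (cases "a \<in> K") blast+
  qed
  have inA: "lattice_floor z \<in> K" if z: "z \<in> A" for z
  proof -
    obtain a I where "cube_wt E m r a I \<le> n" "a \<in> K" "z \<in> cube_pts a I"
      using z unfolding A_def by blast
    then have "level_conn r n (lattice_floor p) a" "level_conn r n a (lattice_floor z)"
      using level_conn_cube_verts lattice_floor_in_cube_verts unfolding K_def level_component_def by blast+
    then show ?thesis using level_conn_trans unfolding K_def level_component_def by blast
  qed
  have inB: "lattice_floor z \<notin> K" if z: "z \<in> B" for z
  proof -
    obtain a I where "cube_wt E m r a I \<le> n" "a \<notin> K" "z \<in> cube_pts a I"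
      using z unfolding B_def by blast
    then have "level_conn r n (lattice_floor z) a" "a \<notin> K"
      using level_conn_sym level_conn_cube_verts lattice_floor_in_cube_verts by blast+
    then show ?thesis using level_conn_trans unfolding K_def level_component_def by blast
  qed
  obtain g where g: "path g" "path_image g \<subseteq> Sset E m r n" "pathstart g = p" "pathfinish g = q"
    using pc unfolding path_component_def by blast
  have ends: "p \<in> path_image g" "q \<in> path_image g" using g(3,4) by auto
  have "lattice_floor p \<in> K" by (simp add: K_def level_component_def level_conn_refl)
  moreover have "p \<in> A \<union> B" using ends g(2) cover by blast
  ultimately have "p \<in> A" using inB by blast
  have "A \<inter> B \<inter> path_image g = {}" using inA inB by blast
  then have "A \<inter> path_image g = {} \<or> B \<inter> path_image g = {}"
    using connected_closedD[OF connected_path_image[OF g(1)]] g(2) cover closed by blast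
  then have "B \<inter> path_image g = {}" using \<open>p \<in> A\<close> ends(1) by blast
  then have "q \<in> A" using ends g(2) cover by blast
  then show ?thesis using inA by (simp add: K_def level_component_def)
qed

end

section \<open>Sign flips and the relations of \<open>\<bbbH>(\<Gamma>;\<int>)\<close>\<close>

lemma frag_cmul_diff_right: "frag_cmul c (a - b) = frag_cmul c a - frag_cmul c b"
  by (rule poly_mapping_eqI) (simp add: lookup_minus algebra_simps)

lemma frag_cmul_telescope:
  "c1 * c2 = c3 \<Longrightarrow> (a - frag_cmul c1 b) + frag_cmul c1 (b - frag_cmul c2 d) = a - frag_cmul c3 d"
  by (simp add: frag_cmul_diff_right)

lemma subgroup_free_Abelian_group_closed:
  assumes N: "subgroup N (free_Abelian_group S)"
  shows subgroup_free_Abelian_add: "a \<in> N \<Longrightarrow> b \<in> N \<Longrightarrow> a + b \<in> N"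
    and subgroup_free_Abelian_diff: "a \<in> N \<Longrightarrow> b \<in> N \<Longrightarrow> a - b \<in> N"
    and subgroup_free_Abelian_cmul: "a \<in> N \<Longrightarrow> frag_cmul c a \<in> N"
    and subgroup_free_Abelian_zero: "0 \<in> N"
proof -
  have keys: "a \<in> N \<Longrightarrow> Poly_Mapping.keys a \<subseteq> S" for a
    using subgroup.subset[OF N] by (metis carrier_free_Abelian_group_iff subsetD)
  show add: "a \<in> N \<Longrightarrow> b \<in> N \<Longrightarrow> a + b \<in> N" for a b
    using subgroup.m_closed[OF N, of a b] by simp
  have neg: "a \<in> N \<Longrightarrow> - a \<in> N" for a
    using subgroup.m_inv_closed[OF N, of a] keys[of a] by simp
  show "a \<in> N \<Longrightarrow> b \<in> N \<Longrightarrow> a - b \<in> N" for a b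
    using add[of a "-b"] neg[of b] by simp
  show "a \<in> N \<Longrightarrow> frag_cmul c a \<in> N" for a
    using group.subgroup_int_pow_closed[OF group_free_Abelian_group N, of a c] keys[of a] by simp
  show "0 \<in> N" using subgroup.one_closed[OF N] by simp
qed

lemma keys_frag_of_diff_cmul: "Poly_Mapping.keys (frag_of a - frag_cmul c (frag_of b)) \<subseteq> {a, b}"
  using keys_diff[of "frag_of a" "frag_cmul c (frag_of b)"] keys_cmul[of c "frag_of b"]
  by (auto simp: keys_frag_of)

lemma HRel_subset_carrier: "HRel E m \<subseteq> carrier (free_Abelian_group (Char (-1) E m))"
proof
  fix a assume "a \<in> HRel E m"
  then consider k where "a = frag_of k" "k \<in> Char (-1) E m"
    | k k' c where "a = frag_of k - frag_cmul c (frag_of k')" "k \<in> Char (-1) E m" "k' \<in> Char (-1) E m"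
    unfolding HRel_def using Char_add_dualf Char_diff_dualf by blast
  then show "a \<in> carrier (free_Abelian_group (Char (-1) E m))"
  proof cases
    case (2 k k' c)
    then show ?thesis using keys_frag_of_diff_cmul[of k c k'] by auto
  qed (simp add: keys_frag_of)
qed

context plumbing
begin

abbreviation FChar :: "(('v \<Rightarrow> int) \<Rightarrow>\<^sub>0 int) monoid" where
  "FChar \<equiv> free_Abelian_group (Char (-1) E m)"

definition Rels :: "(('v \<Rightarrow> int) \<Rightarrow>\<^sub>0 int) set" where
  "Rels = generate FChar (HRel E m)"

lemma subgroup_Rels: "subgroup Rels FChar"
  unfolding Rels_def by (rule group.generate_is_subgroup[OF group_free_Abelian_group HRel_subset_carrier])

lemmas Rels_add = subgroup_free_Abelian_add[OF subgroup_Rels]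
  and Rels_diff = subgroup_free_Abelian_diff[OF subgroup_Rels]
  and Rels_cmul = subgroup_free_Abelian_cmul[OF subgroup_Rels]
  and Rels_zero = subgroup_free_Abelian_zero[OF subgroup_Rels]

lemma HRel_in_Rels: "a \<in> HRel E m \<Longrightarrow> a \<in> Rels"
  unfolding Rels_def by (rule generate.incl)

end

locale forest_plumbing = plumbing E m for E :: "'v::finite \<Rightarrow> 'v \<Rightarrow> bool" and m +
  assumes forest: "plumbing_forest E"
begin

lemma E_sym: "E a b \<longleftrightarrow> E b a"
  using forest unfolding plumbing_forest_def by auto

lemma E_irrefl: "\<not> E a a"
  using forest unfolding plumbing_forest_def by auto

definition vertex_sign :: "'v \<Rightarrow> int" where
  "vertex_sign v = (if (SOME c :: 'v \<Rightarrow> bool. \<forall>a b. E a b \<longrightarrow> c a \<noteq> c b) v then 1 else -1)"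

lemma vertex_sign_cases: "vertex_sign v = 1 \<or> vertex_sign v = -1"
  by (simp add: vertex_sign_def)

lemma vertex_sign_square [simp]: "vertex_sign v * vertex_sign v = 1"
  by (simp add: vertex_sign_def)

lemma vertex_sign_adj: "E a b \<Longrightarrow> vertex_sign a = - vertex_sign b"
  using someI_ex[OF plumbing_forest_bipartite[OF forest]] unfolding vertex_sign_def by auto

text \<open>Flipping the sign of the coordinates on one colour class of the bipartite graph
  exchanges the two conventions for the pairing of adjacent vertices.\<close>

definition flip :: "('v \<Rightarrow> int) \<Rightarrow> ('v \<Rightarrow> int)" where
  "flip k = (\<lambda>u. vertex_sign u * k u)"

lemma flip_flip [simp]: "flip (flip k) = k"
  by (simp add: flip_def mult.assoc[symmetric])

lemma pair_flip: "pair (-1) E m (flip x) (flip y) = pair 1 E m x y"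
proof -
  have "(\<Sum>v\<in>UNIV. \<Sum>w\<in>UNIV. if E v w then vertex_sign v * x v * (vertex_sign w * y w) else 0)
      = - (\<Sum>v\<in>UNIV. \<Sum>w\<in>UNIV. if E v w then x v * y w else 0)"
    unfolding sum_negf[symmetric]
  proof (intro sum.cong refl)
    fix v w
    show "(if E v w then vertex_sign v * x v * (vertex_sign w * y w) else 0) = - (if E v w then x v * y w else 0)"
    proof (cases "E v w")
      case True
      then have "vertex_sign v * vertex_sign w = -1"
        using vertex_sign_adj[OF True] vertex_sign_cases[of w] by auto
      moreover have "vertex_sign v * x v * (vertex_sign w * y w) = (vertex_sign v * vertex_sign w) * (x v * y w)"
        by (simp only: mult_ac)
      ultimately show ?thesis using True by simp
    qed simp
  qed
  moreover have "(\<Sum>v\<in>UNIV. of_int (m v) * (vertex_sign v * x v) * (vertex_sign v * y v))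
      = (\<Sum>v\<in>UNIV. of_int (m v) * x v * y v)"
  proof (intro sum.cong refl)
    fix v
    have "of_int (m v) * (vertex_sign v * x v) * (vertex_sign v * y v)
        = (vertex_sign v * vertex_sign v) * (of_int (m v) * x v * y v)"
      by (simp only: mult_ac)
    then show "of_int (m v) * (vertex_sign v * x v) * (vertex_sign v * y v) = of_int (m v) * x v * y v"
      by simp
  qed
  ultimately show ?thesis unfolding pair_def flip_def by simp
qed

lemma evalk_flip: "evalk (flip k) x = evalk k (flip x)"
  by (simp add: evalk_def flip_def algebra_simps)

lemma Char_flip_iff: "k \<in> Char (-1) E m \<longleftrightarrow> flip k \<in> Char 1 E m"
proof
  assume "k \<in> Char (-1) E m"
  then have "evalk k (flip x) mod 2 = pair (-1) E m (flip x) (flip x) mod 2" for x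
    unfolding Char_def by blast
  then show "flip k \<in> Char 1 E m" unfolding Char_def by (simp add: evalk_flip pair_flip)
next
  assume "flip k \<in> Char 1 E m"
  then have "evalk (flip k) (flip x) mod 2 = pair 1 E m (flip x) (flip x) mod 2" for x
    unfolding Char_def by blast
  moreover have "pair 1 E m (flip x) (flip x) = pair (-1) E m x x" for x
    using pair_flip[of "flip x" "flip x"] by simp
  ultimately show "k \<in> Char (-1) E m" unfolding Char_def by (simp add: evalk_flip)
qed

lemma dualf_basis_self: "dualf s E m (basis v) v = m v"
  by (simp add: dualf_basis E_irrefl)

lemma flip_dualf_basis: "flip (dualf (-1) E m (basis v)) = (\<lambda>u. vertex_sign v * dualf 1 E m (basis v) u)"
proof
  fix u
  show "flip (dualf (-1) E m (basis v)) u = vertex_sign v * dualf 1 E m (basis v) u"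
  proof (cases "u \<noteq> v \<and> E v u")
    case True
    then show ?thesis using vertex_sign_adj[of v u] by (simp add: flip_def dualf_basis)
  qed (auto simp: flip_def dualf_basis E_irrefl)
qed

lemma pair_incr: "pair 1 E m (incr x v) (incr x v) = pair 1 E m x x + 2 * dualf 1 E m x v + m v"
proof -
  have "pair 1 E m (basis v) x = pair 1 E m x (basis v)" by (rule pair_commute[OF E_sym])
  then show ?thesis
    unfolding incr_def pair_add_left pair_add_right by (simp add: dualf_def dualf_basis_self[unfolded dualf_def])
qed

lemma wt_incr:
  assumes "r \<in> Char 1 E m"
  shows "2 * wt E m r (incr x v) = 2 * wt E m r x - (shift r x v + m v)"
  using wt_double[OF assms, of x] wt_double[OF assms, of "incr x v"] pair_incr[of x v]
  unfolding incr_def by (simp add: evalk_add_right evalk_basis shift_def)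

lemma shift_incr_self: "shift r (incr x v) v = shift r x v + 2 * m v"
  by (simp add: shift_incr dualf_basis_self)

lemma wt_incr_eq_iff: "r \<in> Char 1 E m \<Longrightarrow> wt E m r (incr x v) = wt E m r x \<longleftrightarrow> shift r x v = - m v"
  using wt_incr[of r x v] by auto

lemma wt_incr_less_iff: "r \<in> Char 1 E m \<Longrightarrow> wt E m r (incr x v) < wt E m r x \<longleftrightarrow> shift r x v > - m v"
  using wt_incr[of r x v] by auto

lemma wt_less_incr_iff: "r \<in> Char 1 E m \<Longrightarrow> wt E m r x < wt E m r (incr x v) \<longleftrightarrow> shift r (incr x v) v < m v"
  using wt_incr[of r x v] shift_incr_self[of r x v] by auto

definition char_at :: "('v \<Rightarrow> int) \<Rightarrow> ('v \<Rightarrow> int) \<Rightarrow> ('v \<Rightarrow> int)" where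
  "char_at r x = flip (shift r x)"

lemma Char_char_at: "r \<in> Char 1 E m \<Longrightarrow> char_at r x \<in> Char (-1) E m"
  unfolding char_at_def using Char_flip_iff Char_shift by (metis flip_flip)

lemma char_at_incr:
  "char_at r (incr x v) = (\<lambda>u. char_at r x u + 2 * vertex_sign v * dualf (-1) E m (basis v) u)"
proof
  fix u
  define D where "D = dualf (-1) E m (basis v) u"
  define d where "d = dualf 1 E m (basis v) u"
  have flipped: "vertex_sign u * D = vertex_sign v * d"
    using fun_cong[OF flip_dualf_basis[of v], of u] by (simp add: flip_def D_def d_def)
  have "vertex_sign v * D = vertex_sign u * vertex_sign v * (vertex_sign u * D)"
    using vertex_sign_square[of u] by (simp add: algebra_simps)
  also have "\<dots> = vertex_sign u * (vertex_sign v * vertex_sign v) * d"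
    unfolding flipped by (simp only: mult_ac)
  finally have "vertex_sign v * D = vertex_sign u * d" by simp
  then show "char_at r (incr x v) u = char_at r x u + 2 * vertex_sign v * dualf (-1) E m (basis v) u"
    by (simp add: char_at_def flip_def shift_incr algebra_simps D_def d_def)
qed

lemma abs_char_at: "\<bar>char_at r x u\<bar> = \<bar>shift r x u\<bar>"
  using vertex_sign_cases[of u] by (auto simp: char_at_def flip_def)

lemma HRel_step:
  assumes r: "r \<in> Char 1 E m" and w: "wt E m r (incr x v) = wt E m r x"
  shows "frag_of (char_at r x) - frag_cmul (frame_sign v) (frag_of (char_at r (incr x v))) \<in> HRel E m"
proof -
  define k where "k = char_at r x"
  have k: "k \<in> Char (-1) E m" using Char_char_at[OF r] by (simp add: k_def)
  have "shift r x v = - m v" using wt_incr_eq_iff[OF r] w by simp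
  then have kv: "k v = - vertex_sign v * m v" by (simp add: k_def char_at_def flip_def)
  consider "vertex_sign v = 1" | "vertex_sign v = -1" using vertex_sign_cases by blast
  then show ?thesis
  proof cases
    case 1
    then have "k v = - m v" using kv by simp
    then have "frag_of k - frag_cmul (frame_sign v) (frag_of (\<lambda>u. k u + 2 * dualf (-1) E m (basis v) u))
        \<in> HRel E m"
      using k unfolding HRel_def frame_sign_def by blast
    moreover have "char_at r (incr x v) = (\<lambda>u. k u + 2 * dualf (-1) E m (basis v) u)"
      using 1 by (simp add: char_at_incr k_def)
    ultimately show ?thesis by (simp add: k_def)
  next
    case 2
    then have "k v = m v" using kv by simp
    then have "frag_of k - frag_cmul (frame_sign v) (frag_of (\<lambda>u. k u - 2 * dualf (-1) E m (basis v) u))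
        \<in> HRel E m"
      using k unfolding HRel_def frame_sign_def by blast
    moreover have "char_at r (incr x v) = (\<lambda>u. k u - 2 * dualf (-1) E m (basis v) u)"
      using 2 by (simp add: char_at_incr k_def)
    ultimately show ?thesis by (simp add: k_def)
  qed
qed

lemma HRel_descent:
  assumes r: "r \<in> Char 1 E m" and adj: "lattice_adj x y" and w: "wt E m r y < wt E m r x"
  shows "frag_of (char_at r x) \<in> HRel E m"
proof -
  obtain v where "y = incr x v \<or> x = incr y v" using adj by (auto simp: lattice_adj_def)
  then have "\<bar>char_at r x v\<bar> > - m v"
    using wt_incr_less_iff[OF r] wt_less_incr_iff[OF r] w abs_char_at[of r x v] by auto
  then show ?thesis using Char_char_at[OF r] unfolding HRel_def by blast
qed

lemma Rels_lattice_adj: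
  assumes r: "r \<in> Char 1 E m" and adj: "lattice_adj y z" and w: "wt E m r z = wt E m r y"
  shows "frag_of (char_at r y) - frag_cmul (point_sign y * point_sign z) (frag_of (char_at r z)) \<in> Rels"
proof -
  obtain v where "z = incr y v \<or> y = incr z v" using adj by (auto simp: lattice_adj_def)
  then show ?thesis
  proof
    assume z: "z = incr y v"
    have "point_sign y * point_sign z = frame_sign v"
      by (simp add: z point_sign_incr mult.assoc[symmetric])
    then show ?thesis using HRel_step[OF r, of y v] w z HRel_in_Rels by simp
  next
    assume y: "y = incr z v"
    have "frame_sign v * frame_sign v = 1" by (simp add: frame_sign_def)
    then have sign: "point_sign y * point_sign z = frame_sign v"
      by (simp add: y point_sign_incr mult_ac)
    have "frag_of (char_at r z) - frag_cmul (frame_sign v) (frag_of (char_at r y)) \<in> Rels"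
      using HRel_step[OF r, of z v] w y HRel_in_Rels by simp
    then have "frag_cmul (- frame_sign v)
        (frag_of (char_at r z) - frag_cmul (frame_sign v) (frag_of (char_at r y))) \<in> Rels"
      by (rule Rels_cmul)
    moreover have "frag_cmul (- frame_sign v)
        (frag_of (char_at r z) - frag_cmul (frame_sign v) (frag_of (char_at r y)))
      = frag_of (char_at r y) - frag_cmul (point_sign y * point_sign z) (frag_of (char_at r z))"
      using \<open>frame_sign v * frame_sign v = 1\<close> sign
      by (simp add: frag_cmul_diff_right algebra_simps flip: frag_cmul_distrib)
    ultimately show ?thesis by simp
  qed
qed

lemma Rels_flat_conn:
  assumes r: "r \<in> Char 1 E m" and conn: "flat_conn r n x y" and w: "wt E m r x = n"
  shows "frag_of (char_at r x) - frag_cmul (point_sign x * point_sign y) (frag_of (char_at r y)) \<in> Rels"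
  using conn unfolding flat_conn_def
proof (induction rule: rtranclp_induct)
  case base
  show ?case using Rels_zero by simp
next
  case (step y z)
  then have "frag_of (char_at r y) - frag_cmul (point_sign y * point_sign z) (frag_of (char_at r z)) \<in> Rels"
    using Rels_lattice_adj[OF r] by simp
  then have "(frag_of (char_at r x) - frag_cmul (point_sign x * point_sign y) (frag_of (char_at r y)))
      + frag_cmul (point_sign x * point_sign y)
          (frag_of (char_at r y) - frag_cmul (point_sign y * point_sign z) (frag_of (char_at r z))) \<in> Rels"
    using step.IH by (intro Rels_add Rels_cmul)
  moreover have "point_sign x * point_sign y * (point_sign y * point_sign z) = point_sign x * point_sign z"
    by (metis mult.assoc mult.right_neutral point_sign_square)
  ultimately show ?case by (simp only: frag_cmul_telescope)
qed

text \<open>Relations (II) transport the generator along the part of the path of constant weight, and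
  relation (I) kills it where the weight drops.\<close>

lemma Rels_descends:
  assumes r: "r \<in> Char 1 E m" and conn: "level_conn r n x y"
    and wx: "wt E m r x = n" and wy: "wt E m r y < n"
  shows "frag_of (char_at r x) \<in> Rels"
proof -
  have "\<not> flat_conn r n x y" using flat_conn_wt wx wy by fastforce
  then obtain y' z where flat: "flat_conn r n x y'" and adj: "lattice_adj y' z" and wz: "wt E m r z < n"
    using level_conn_flat_or_descends[OF conn wx] by blast
  have "wt E m r y' = n" using flat_conn_wt[OF flat wx] .
  then have "frag_of (char_at r y') \<in> Rels"
    using HRel_descent[OF r adj] wz HRel_in_Rels by simp
  then have "(frag_of (char_at r x) - frag_cmul (point_sign x * point_sign y') (frag_of (char_at r y')))
      + frag_cmul (point_sign x * point_sign y') (frag_of (char_at r y')) \<in> Rels"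
    using Rels_flat_conn[OF r flat wx] by (intro Rels_add Rels_cmul)
  then show ?thesis by simp
qed

end

section \<open>\<open>\<bbbH>(\<Gamma>;\<int>)\<close> is free on the minimal sublevel components\<close>

locale neg_definite_forest = forest_plumbing E m for E :: "'v::finite \<Rightarrow> 'v \<Rightarrow> bool" and m +
  assumes negdef: "neg_definite E m"
begin

lemma pair_self_neg:
  fixes x :: "'v \<Rightarrow> int"
  assumes "x \<noteq> (\<lambda>_. 0)"
  shows "pair 1 E m x x < 0"
proof -
  have "(\<lambda>v. real_of_int (x v)) \<noteq> (\<lambda>_. 0)" using assms by (auto simp: fun_eq_iff)
  then have "pair 1 E m (\<lambda>v. real_of_int (x v)) (\<lambda>v. real_of_int (x v)) < 0"
    using negdef unfolding neg_definite_def by blast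
  then show ?thesis using pair_of_int[of 1 E m x x, where 'a=real] by simp
qed

lemma shift_inj: "shift r x = shift r y \<Longrightarrow> x = y"
proof (rule ccontr)
  assume eq: "shift r x = shift r y" and "x \<noteq> y"
  define z where "z = (\<lambda>u. x u + (-1) * y u)"
  have "z \<noteq> (\<lambda>_. 0)" using \<open>x \<noteq> y\<close> by (auto simp: z_def fun_eq_iff)
  then have neg: "pair 1 E m z z < 0" by (rule pair_self_neg)
  have "dualf 1 E m x = dualf 1 E m y" using eq by (auto simp: shift_def fun_eq_iff)
  then have "dualf 1 E m z = (\<lambda>_. 0)" unfolding z_def dualf_add dualf_cmult by simp
  then have "pair 1 E m z z = 0" using evalk_dualf[of 1 E m z z] by (simp add: evalk_def)
  with neg show False by simp
qed

text \<open>Meaningful only for \<open>K\<close> in the orbit of \<open>r\<close>, where \<open>shift_inj\<close> makes \<open>x\<close> unique.\<close>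

definition coord :: "('v \<Rightarrow> int) \<Rightarrow> ('v \<Rightarrow> int) \<Rightarrow> ('v \<Rightarrow> int)" where
  "coord r K = (THE x. K = shift r x)"

lemma coord_shift [simp]: "coord r (shift r x) = x"
  unfolding coord_def using shift_inj by blast

lemma shift_rep_orbit_coord: "shift (rep (orbit E m K)) (coord (rep (orbit E m K)) K) = K"
proof -
  obtain z where "rep (orbit E m K) = shift K z" using rep_orbit_in_orbit[of K] by (auto simp: orbit_eq_range_shift)
  then have "K = shift (rep (orbit E m K)) (\<lambda>u. - z u)"
    using shift_shift[of K z "\<lambda>u. - z u"] shift_zero[of K] by simp
  then show ?thesis by (metis coord_shift)
qed

lemma orbit_rep_Orbits: "Ob \<in> Orbits E m \<Longrightarrow> orbit E m (rep Ob) = Ob"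
  unfolding Orbits_def by (metis imageE orbit_shift shift_rep_orbit_coord)

definition MinComps :: "(('v \<Rightarrow> int) set \<times> int \<times> ('v \<Rightarrow> int) set) set" where
  "MinComps = {(Ob, wt E m (rep Ob) x, level_component (rep Ob) (wt E m (rep Ob) x) x) | Ob x.
      Ob \<in> Orbits E m \<and> component_min (rep Ob) x}"

abbreviation FMinComps :: "((('v \<Rightarrow> int) set \<times> int \<times> ('v \<Rightarrow> int) set) \<Rightarrow>\<^sub>0 int) monoid" where
  "FMinComps \<equiv> free_Abelian_group MinComps"

definition base_of :: "('v \<Rightarrow> int) \<Rightarrow> ('v \<Rightarrow> int)" where
  "base_of k = rep (orbit E m (flip k))"

definition point_of :: "('v \<Rightarrow> int) \<Rightarrow> ('v \<Rightarrow> int)" where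
  "point_of k = coord (base_of k) (flip k)"

definition weight_of :: "('v \<Rightarrow> int) \<Rightarrow> int" where
  "weight_of k = wt E m (base_of k) (point_of k)"

definition triple_of :: "('v \<Rightarrow> int) \<Rightarrow> ('v \<Rightarrow> int) set \<times> int \<times> ('v \<Rightarrow> int) set" where
  "triple_of k = (orbit E m (flip k), weight_of k, level_component (base_of k) (weight_of k) (point_of k))"

definition is_min_char :: "('v \<Rightarrow> int) \<Rightarrow> bool" where
  "is_min_char k \<longleftrightarrow> component_min (base_of k) (point_of k)"

lemma orbit_flip_in_Orbits: "k \<in> Char (-1) E m \<Longrightarrow> orbit E m (flip k) \<in> Orbits E m"
  unfolding Orbits_def using Char_flip_iff by blast

lemma Char_base_of: "k \<in> Char (-1) E m \<Longrightarrow> base_of k \<in> Char 1 E m"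
  unfolding base_of_def using Char_flip_iff Char_rep_orbit by blast

lemma char_at_point_of: "char_at (base_of k) (point_of k) = k"
  unfolding char_at_def base_of_def point_of_def using shift_rep_orbit_coord[of "flip k"] by simp

lemma flip_eq_shift_point_of: "flip k = shift (base_of k) (point_of k)"
  using char_at_point_of[of k] by (metis char_at_def flip_flip)

lemma base_of_char_at: "Ob \<in> Orbits E m \<Longrightarrow> base_of (char_at (rep Ob) x) = rep Ob"
  unfolding base_of_def char_at_def by (simp add: orbit_shift orbit_rep_Orbits)

lemma point_of_char_at: "Ob \<in> Orbits E m \<Longrightarrow> point_of (char_at (rep Ob) x) = x"
  unfolding point_of_def using base_of_char_at by (simp add: char_at_def)

lemma orbit_flip_char_at: "Ob \<in> Orbits E m \<Longrightarrow> orbit E m (flip (char_at (rep Ob) x)) = Ob"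
  by (simp add: char_at_def orbit_shift orbit_rep_Orbits)

lemma triple_of_in_MinComps: "k \<in> Char (-1) E m \<Longrightarrow> is_min_char k \<Longrightarrow> triple_of k \<in> MinComps"
  unfolding MinComps_def triple_of_def is_min_char_def weight_of_def
  using orbit_flip_in_Orbits[of k] by (auto simp: base_of_def)

definition comp_point :: "('v \<Rightarrow> int) set \<times> int \<times> ('v \<Rightarrow> int) set \<Rightarrow> ('v \<Rightarrow> int)" where
  "comp_point t = (SOME x. component_min (rep (fst t)) x \<and> fst (snd t) = wt E m (rep (fst t)) x
      \<and> snd (snd t) = level_component (rep (fst t)) (fst (snd t)) x)"

definition comp_char :: "('v \<Rightarrow> int) set \<times> int \<times> ('v \<Rightarrow> int) set \<Rightarrow> ('v \<Rightarrow> int)" where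
  "comp_char t = char_at (rep (fst t)) (comp_point t)"

lemma comp_point:
  assumes "t \<in> MinComps"
  shows "component_min (rep (fst t)) (comp_point t)" "fst (snd t) = wt E m (rep (fst t)) (comp_point t)"
    "snd (snd t) = level_component (rep (fst t)) (fst (snd t)) (comp_point t)" "fst t \<in> Orbits E m"
proof -
  have "\<exists>x. component_min (rep (fst t)) x \<and> fst (snd t) = wt E m (rep (fst t)) x
      \<and> snd (snd t) = level_component (rep (fst t)) (fst (snd t)) x"
    using assms unfolding MinComps_def by auto
  from someI_ex[OF this]
  show "component_min (rep (fst t)) (comp_point t)" "fst (snd t) = wt E m (rep (fst t)) (comp_point t)"
    "snd (snd t) = level_component (rep (fst t)) (fst (snd t)) (comp_point t)"
    unfolding comp_point_def by blast+
  show "fst t \<in> Orbits E m" using assms unfolding MinComps_def by auto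
qed

lemma comp_point_in_comp: "t \<in> MinComps \<Longrightarrow> comp_point t \<in> snd (snd t)"
  using comp_point(3) by (simp add: level_component_def level_conn_refl)

lemma Char_comp_char: "t \<in> MinComps \<Longrightarrow> comp_char t \<in> Char (-1) E m"
  unfolding comp_char_def using comp_point(4) Char_rep_Orbits Char_char_at by blast

lemma comp_char:
  assumes t: "t \<in> MinComps"
  shows "point_of (comp_char t) = comp_point t" "is_min_char (comp_char t)" "triple_of (comp_char t) = t"
proof -
  have Ob: "fst t \<in> Orbits E m" by (rule comp_point(4)[OF t])
  have base: "base_of (comp_char t) = rep (fst t)" unfolding comp_char_def using base_of_char_at[OF Ob] .
  show point: "point_of (comp_char t) = comp_point t" unfolding comp_char_def using point_of_char_at[OF Ob] .
  show "is_min_char (comp_char t)" unfolding is_min_char_def base point using comp_point(1)[OF t] .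
  show "triple_of (comp_char t) = t"
    unfolding triple_of_def weight_of_def base point
    using orbit_flip_char_at[OF Ob, of "comp_point t"] comp_point(2,3)[OF t]
    unfolding comp_char_def by (cases t) auto
qed

definition comp_map ::
    "(('v \<Rightarrow> int) \<Rightarrow>\<^sub>0 int) \<Rightarrow> ((('v \<Rightarrow> int) set \<times> int \<times> ('v \<Rightarrow> int) set) \<Rightarrow>\<^sub>0 int)" where
  "comp_map = frag_extend (\<lambda>k. if is_min_char k then frag_cmul (point_sign (point_of k)) (frag_of (triple_of k)) else 0)"

definition comp_section ::
    "((('v \<Rightarrow> int) set \<times> int \<times> ('v \<Rightarrow> int) set) \<Rightarrow>\<^sub>0 int) \<Rightarrow> (('v \<Rightarrow> int) \<Rightarrow>\<^sub>0 int)" where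
  "comp_section = frag_extend (\<lambda>t. frag_cmul (point_sign (comp_point t)) (frag_of (comp_char t)))"

lemma comp_map_hom: "comp_map \<in> hom FChar FMinComps"
proof (rule homI)
  fix c assume c: "c \<in> carrier FChar"
  have "Poly_Mapping.keys (comp_map c) \<subseteq> (\<Union>k\<in>Poly_Mapping.keys c.
      Poly_Mapping.keys (if is_min_char k then frag_cmul (point_sign (point_of k)) (frag_of (triple_of k)) else 0))"
    unfolding comp_map_def by (rule keys_frag_extend)
  also have "\<dots> \<subseteq> MinComps"
    using c triple_of_in_MinComps by (auto simp: keys_frag_of split: if_splits)
  finally show "comp_map c \<in> carrier FMinComps" by simp
qed (simp add: comp_map_def frag_extend_add)

lemma group_hom_comp_map: "group_hom FChar FMinComps comp_map"
  by (simp add: group_hom_def group_hom_axioms_def comp_map_hom)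

lemma comp_section_in_carrier:
  assumes "Poly_Mapping.keys a \<subseteq> MinComps"
  shows "comp_section a \<in> carrier FChar"
proof -
  have "Poly_Mapping.keys (comp_section a) \<subseteq> (\<Union>t\<in>Poly_Mapping.keys a.
      Poly_Mapping.keys (frag_cmul (point_sign (comp_point t)) (frag_of (comp_char t))))"
    unfolding comp_section_def by (rule keys_frag_extend)
  also have "\<dots> \<subseteq> Char (-1) E m"
    using assms Char_comp_char by (auto simp: keys_frag_of)
  finally show ?thesis by simp
qed

lemma comp_map_comp_section:
  assumes "Poly_Mapping.keys a \<subseteq> MinComps"
  shows "comp_map (comp_section a) = a"
proof (rule free_Abelian_group_induct[of a MinComps "\<lambda>a. comp_map (comp_section a) = a"])
  fix t assume "t \<in> MinComps"
  then show "comp_map (comp_section (frag_of t)) = frag_of t"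
    using comp_char[of t] by (simp add: comp_map_def comp_section_def frag_extend_cmul)
qed (use assms in \<open>simp_all add: comp_map_def comp_section_def frag_extend_diff\<close>)

lemma comp_map_onto: "comp_map ` carrier FChar = carrier FMinComps"
proof
  show "comp_map ` carrier FChar \<subseteq> carrier FMinComps" using comp_map_hom by (auto simp: hom_def)
  show "carrier FMinComps \<subseteq> comp_map ` carrier FChar"
    using comp_map_comp_section comp_section_in_carrier by (metis carrier_free_Abelian_group_iff image_eqI subsetI)
qed

lemma level_component_eq: "level_conn r n x y \<Longrightarrow> level_component r n x = level_component r n y"
  unfolding level_component_def using level_conn_sym level_conn_trans by blast

lemma comp_map_lattice_adj:
  assumes Ob: "Ob \<in> Orbits E m" and adj: "lattice_adj x y" and w: "wt E m (rep Ob) y = wt E m (rep Ob) x"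
  shows "comp_map (frag_of (char_at (rep Ob) x))
    = frag_cmul (point_sign x * point_sign y) (comp_map (frag_of (char_at (rep Ob) y)))"
proof -
  define r where "r = rep Ob"
  have xy: "level_conn r (wt E m r x) x y" using level_conn_edge[OF adj] w by (simp add: r_def)
  then have yx: "level_conn r (wt E m r y) y x" using level_conn_sym w by (simp add: r_def)
  have min: "is_min_char (char_at r x) \<longleftrightarrow> is_min_char (char_at r y)"
    unfolding is_min_char_def r_def base_of_char_at[OF Ob] point_of_char_at[OF Ob]
    using component_min_level_conn(1) xy yx by (auto simp: r_def)
  have "triple_of (char_at r x) = triple_of (char_at r y)"
    unfolding triple_of_def weight_of_def r_def base_of_char_at[OF Ob] point_of_char_at[OF Ob]
      orbit_flip_char_at[OF Ob]
    using w level_component_eq[OF xy] by (simp add: r_def)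
  then show ?thesis
    using min unfolding r_def[symmetric] comp_map_def
    by (simp add: point_of_char_at[OF Ob, unfolded r_def[symmetric]] mult.assoc)
qed

lemma flip_add_dualf_basis:
  "flip (\<lambda>u. k u + 2 * c * dualf (-1) E m (basis v) u)
    = (\<lambda>u. flip k u + 2 * (c * vertex_sign v) * dualf 1 E m (basis v) u)"
proof
  fix u
  have "vertex_sign u * dualf (-1) E m (basis v) u = vertex_sign v * dualf 1 E m (basis v) u"
    using fun_cong[OF flip_dualf_basis[of v], of u] by (simp add: flip_def)
  then show "flip (\<lambda>u. k u + 2 * c * dualf (-1) E m (basis v) u) u
      = flip k u + 2 * (c * vertex_sign v) * dualf 1 E m (basis v) u"
    by (simp add: flip_def algebra_simps)
qed

text \<open>Relations (II) are sent to zero: they relate the generators at the two ends of a lattice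
  edge of constant weight.\<close>

lemma comp_map_relation:
  assumes k: "k \<in> Char (-1) E m" and c: "c = 1 \<or> c = -1" and kv: "flip k v = - (c * vertex_sign v) * m v"
  shows "comp_map (frag_of k)
    = frag_cmul (frame_sign v) (comp_map (frag_of (\<lambda>u. k u + 2 * c * dualf (-1) E m (basis v) u)))"
proof -
  define Ob where "Ob = orbit E m (flip k)"
  define x where "x = point_of k"
  have Ob: "Ob \<in> Orbits E m" using orbit_flip_in_Orbits[OF k] by (simp add: Ob_def)
  have r: "rep Ob \<in> Char 1 E m" using Char_base_of[OF k] by (simp add: Ob_def base_of_def)
  have k_eq: "k = char_at (rep Ob) x" using char_at_point_of[of k] by (simp add: Ob_def x_def base_of_def)
  then have K: "flip k = shift (rep Ob) x" by (simp add: char_at_def)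
  have "c * vertex_sign v = 1 \<or> c * vertex_sign v = -1" using c vertex_sign_cases[of v] by auto
  then obtain y where y: "flip (\<lambda>u. k u + 2 * c * dualf (-1) E m (basis v) u) = shift (rep Ob) y"
    and adj: "lattice_adj x y" and w: "wt E m (rep Ob) y = wt E m (rep Ob) x"
    and sign: "point_sign x * point_sign y = frame_sign v"
  proof
    assume d: "c * vertex_sign v = 1"
    have "wt E m (rep Ob) (incr x v) = wt E m (rep Ob) x" using wt_incr_eq_iff[OF r] kv d K by simp
    moreover have "point_sign x * point_sign (incr x v) = frame_sign v"
      by (simp add: point_sign_incr mult.assoc[symmetric])
    ultimately show ?thesis
      using that[of "incr x v"] lattice_adj_incr by (simp add: flip_add_dualf_basis d K shift_incr)
  next
    assume d: "c * vertex_sign v = -1"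
    have "shift (rep Ob) (decr x v) v = - m v"
      using shift_incr_self[of "rep Ob" "decr x v" v] kv d K by simp
    then have "wt E m (rep Ob) (decr x v) = wt E m (rep Ob) x"
      using wt_incr_eq_iff[OF r, of "decr x v" v] by simp
    moreover have "point_sign x * point_sign (decr x v) = frame_sign v"
      using point_sign_incr[of "decr x v" v] by (simp add: mult_ac)
    ultimately show ?thesis
      using that[of "decr x v"] lattice_adj_decr by (simp add: flip_add_dualf_basis d K shift_decr)
  qed
  then have "(\<lambda>u. k u + 2 * c * dualf (-1) E m (basis v) u) = char_at (rep Ob) y"
    by (metis char_at_def flip_flip)
  then show ?thesis
    using comp_map_lattice_adj[OF Ob adj w] sign k_eq by simp
qed

lemma not_is_min_char:
  assumes k: "k \<in> Char (-1) E m" and kv: "\<bar>k v\<bar> > - m v"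
  shows "\<not> is_min_char k"
proof -
  define r where "r = base_of k"
  define x where "x = point_of k"
  have K: "flip k = shift r x" using flip_eq_shift_point_of by (simp add: r_def x_def)
  have r: "r \<in> Char 1 E m" using Char_base_of[OF k] by (simp add: r_def)
  have "\<bar>flip k v\<bar> = \<bar>k v\<bar>" using vertex_sign_cases[of v] by (auto simp: flip_def)
  then have Kv: "\<bar>shift r x v\<bar> > - m v" using kv K by simp
  have "\<exists>y. lattice_adj x y \<and> wt E m r y < wt E m r x"
  proof (cases "shift r x v > - m v")
    case True
    then show ?thesis using wt_incr_less_iff[OF r] lattice_adj_incr by blast
  next
    case False
    then have "shift r (incr (decr x v) v) v < m v" using Kv by simp
    then show ?thesis using wt_less_incr_iff[OF r, of "decr x v" v] lattice_adj_decr by auto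
  qed
  then show ?thesis
    using level_conn_edge unfolding is_min_char_def component_min_def r_def[symmetric] x_def[symmetric]
    by (meson less_le_not_le)
qed

lemma HRel_subset_kernel: "HRel E m \<subseteq> kernel FChar FMinComps comp_map"
proof
  fix a assume a: "a \<in> HRel E m"
  have "comp_map a = 0"
    using a unfolding HRel_def
  proof (elim UnE CollectE exE conjE)
    fix k v assume "a = frag_of k" "k \<in> Char (-1) E m" "- m v < \<bar>k v\<bar>"
    then show "comp_map a = 0" using not_is_min_char by (auto simp: comp_map_def)
  next
    fix k v assume a: "a = frag_of k - frag_cmul (if even (m v) then 1 else - 1)
        (frag_of (\<lambda>u. k u - 2 * dualf (- 1) E m (basis v) u))"
      and k: "k \<in> Char (-1) E m" and kv: "k v = m v"
    have "flip k v = - ((-1) * vertex_sign v) * m v" using kv by (simp add: flip_def)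
    from comp_map_relation[OF k _ this] show "comp_map a = 0"
      unfolding a by (simp add: comp_map_def frag_extend_diff frag_extend_cmul frame_sign_def)
  next
    fix k v assume a: "a = frag_of k - frag_cmul (if even (m v) then 1 else - 1)
        (frag_of (\<lambda>u. k u + 2 * dualf (- 1) E m (basis v) u))"
      and k: "k \<in> Char (-1) E m" and kv: "k v = - m v"
    have "flip k v = - (1 * vertex_sign v) * m v" using kv by (simp add: flip_def)
    from comp_map_relation[OF k _ this] show "comp_map a = 0"
      unfolding a by (simp add: comp_map_def frag_extend_diff frag_extend_cmul frame_sign_def)
  qed
  moreover have "a \<in> carrier FChar" using HRel_subset_carrier a by blast
  ultimately show "a \<in> kernel FChar FMinComps comp_map" by (simp add: kernel_def)
qed

lemma Rels_subset_kernel: "Rels \<subseteq> kernel FChar FMinComps comp_map"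
  unfolding Rels_def
  by (rule group.generate_subgroup_incl[OF group_free_Abelian_group HRel_subset_kernel
        group_hom.subgroup_kernel[OF group_hom_comp_map]])

lemma frag_of_minus_comp_section_in_Rels:
  assumes k: "k \<in> Char (-1) E m"
  shows "frag_of k - comp_section (comp_map (frag_of k)) \<in> Rels"
proof -
  define r where "r = base_of k"
  define x where "x = point_of k"
  have r: "r \<in> Char 1 E m" using Char_base_of[OF k] by (simp add: r_def)
  have k_eq: "char_at r x = k" using char_at_point_of by (simp add: r_def x_def)
  show ?thesis
  proof (cases "is_min_char k")
    case True
    define t where "t = triple_of k"
    have t: "t \<in> MinComps" using triple_of_in_MinComps[OF k True] by (simp add: t_def)
    have min: "component_min r x" using True by (simp add: is_min_char_def r_def x_def)
    have base: "rep (fst t) = r" by (simp add: t_def triple_of_def base_of_def r_def)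
    have "snd (snd t) = level_component r (wt E m r x) x"
      by (simp add: t_def triple_of_def weight_of_def r_def x_def)
    then have "level_conn r (wt E m r x) x (comp_point t)"
      using comp_point_in_comp[OF t] by (simp add: level_component_def)
    then have "flat_conn r (wt E m r x) x (comp_point t)" by (rule component_min_flat_conn[OF min])
    from Rels_flat_conn[OF r this refl]
    have "frag_of k - frag_cmul (point_sign x * point_sign (comp_point t)) (frag_of (char_at r (comp_point t))) \<in> Rels"
      using k_eq by simp
    moreover have "comp_section (comp_map (frag_of k))
        = frag_cmul (point_sign x * point_sign (comp_point t)) (frag_of (char_at r (comp_point t)))"
      using True base by (simp add: comp_map_def comp_section_def frag_extend_cmul t_def[symmetric] x_def comp_char_def)
    ultimately show ?thesis by simp
  next
    case False
    then obtain y where "level_conn r (wt E m r x) x y" "wt E m r y < wt E m r x"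
      unfolding is_min_char_def component_min_def r_def[symmetric] x_def[symmetric] by force
    then have "frag_of k \<in> Rels" using Rels_descends[OF r] k_eq by blast
    then show ?thesis using False by (simp add: comp_map_def comp_section_def)
  qed
qed

lemma kernel_subset_Rels: "kernel FChar FMinComps comp_map \<subseteq> Rels"
proof
  fix c assume c: "c \<in> kernel FChar FMinComps comp_map"
  then have keys: "Poly_Mapping.keys c \<subseteq> Char (-1) E m" and "comp_map c = 0" by (auto simp: kernel_def)
  have "c - comp_section (comp_map c) \<in> Rels"
  proof (rule free_Abelian_group_induct[of c "Char (-1) E m" "\<lambda>c. c - comp_section (comp_map c) \<in> Rels"])
    fix x y assume "x - comp_section (comp_map x) \<in> Rels" "y - comp_section (comp_map y) \<in> Rels"
    then have "(x - comp_section (comp_map x)) - (y - comp_section (comp_map y)) \<in> Rels" by (rule Rels_diff)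
    then show "x - y - comp_section (comp_map (x - y)) \<in> Rels"
      by (simp add: comp_map_def comp_section_def frag_extend_diff algebra_simps)
  qed (use keys Rels_zero frag_of_minus_comp_section_in_Rels in \<open>simp_all add: comp_map_def comp_section_def\<close>)
  then show "c \<in> Rels" using \<open>comp_map c = 0\<close> by (simp add: comp_section_def)
qed

lemma HGroup_iso_FMinComps: "HGroup E m \<cong> FMinComps"
proof -
  have "kernel FChar FMinComps comp_map = Rels" using kernel_subset_Rels Rels_subset_kernel by blast
  then have "HGroup E m = FChar Mod kernel FChar FMinComps comp_map" by (simp add: HGroup_def Rels_def)
  then show ?thesis using group_hom.FactGroup_iso[OF group_hom_comp_map comp_map_onto] by simp
qed

end

section \<open>Sublevel sets are finite\<close>

lemma le_of_quadratic_le: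
  fixes c A R t :: real
  assumes "c > 0" "A \<ge> 0" "R \<ge> 0" "t \<ge> 0" and quad: "c * t\<^sup>2 \<le> A + R * t"
  shows "t \<le> (A + R) / c + 1"
proof (cases "t \<le> 1")
  case True
  moreover have "0 \<le> (A + R) / c" using assms by simp
  ultimately show ?thesis by linarith
next
  case False
  then have "c * t * t \<le> (A + R) * t"
    using quad mult_left_mono[of 1 t A] \<open>A \<ge> 0\<close> by (simp add: power2_eq_square distrib_right)
  then have "c * t \<le> A + R" using False by simp
  then show ?thesis using \<open>c > 0\<close> by (simp add: field_simps)
qed

lemma finite_int_box: "finite {x :: 'v::finite \<Rightarrow> int. \<forall>v. \<bar>x v\<bar> \<le> b}"
proof -
  have "\<bar>x v\<bar> \<le> b \<longleftrightarrow> x v \<in> {-b..b}" for x :: "'v \<Rightarrow> int" and v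
    by (auto simp: abs_le_iff)
  then have "{x :: 'v \<Rightarrow> int. \<forall>v. \<bar>x v\<bar> \<le> b} = PiE UNIV (\<lambda>_. {-b..b})"
    by (auto simp: PiE_def Pi_def)
  then show ?thesis by (simp add: finite_PiE)
qed

context plumbing
begin

definition qform :: "real^'v \<Rightarrow> real" where
  "qform y = pair 1 E m (\<lambda>v. y $ v) (\<lambda>v. y $ v)"

lemma continuous_on_qform: "continuous_on S qform"
proof -
  have continuous_on_if: "continuous_on S f \<Longrightarrow> continuous_on S (\<lambda>y. if P then f y else (0::real))" for P f
    by (cases P) auto
  show ?thesis
    unfolding qform_def pair_def
    by (intro continuous_intros continuous_on_if continuous_on_component continuous_on_id)
qed

lemma qform_scaleR: "qform (c *\<^sub>R y) = c\<^sup>2 * qform y"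
  unfolding qform_def pair_def
  by (simp add: sum_distrib_left algebra_simps power2_eq_square if_distrib cong: if_cong)

lemma qform_lattice_vec: "qform (lattice_vec x) = real_of_int (pair 1 E m x x)"
  using pair_of_int[of 1 E m x x, where 'a=real] by (simp add: qform_def lattice_vec_def)

lemma qform_neg_bound:
  assumes "neg_definite E m"
  shows "\<exists>c>0. \<forall>y. qform y \<le> - c * (norm y)\<^sup>2"
proof -
  have "compact (sphere (0::real^'v) 1)" "sphere (0::real^'v) 1 \<noteq> {}" by simp_all
  then obtain y0 where y0: "y0 \<in> sphere 0 1" and max: "\<forall>y\<in>sphere 0 1. qform y \<le> qform y0"
    using continuous_attains_sup[OF _ _ continuous_on_qform] by blast
  have "y0 \<noteq> 0" using y0 by auto
  then have "(\<lambda>v. y0 $ v) \<noteq> (\<lambda>_. 0)" by (metis vec_eq_iff zero_index)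
  then have neg: "qform y0 < 0" using assms unfolding neg_definite_def qform_def by blast
  have "qform y \<le> qform y0 * (norm y)\<^sup>2" for y
  proof (cases "y = 0")
    case True
    then show ?thesis using qform_scaleR[of 0 0] by simp
  next
    case False
    define u where "u = (1 / norm y) *\<^sub>R y"
    have "qform u \<le> qform y0" using max False by (simp add: u_def)
    moreover have "qform y = (norm y)\<^sup>2 * qform u"
      using qform_scaleR[of "norm y" u] False by (simp add: u_def)
    ultimately show ?thesis using mult_right_mono[of "qform u" "qform y0" "(norm y)\<^sup>2"] by (simp add: mult.commute)
  qed
  then show ?thesis using neg by (intro exI[of _ "- qform y0"]) auto
qed

lemma evalk_le_norm: "real_of_int (evalk r x) \<le> (\<Sum>v\<in>UNIV. \<bar>real_of_int (r v)\<bar>) * norm (lattice_vec x)"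
proof -
  have "real_of_int (evalk r x) = (\<Sum>v\<in>UNIV. real_of_int (r v) * lattice_vec x $ v)"
    by (simp add: evalk_def lattice_vec_def)
  also have "\<dots> \<le> (\<Sum>v\<in>UNIV. \<bar>real_of_int (r v)\<bar> * norm (lattice_vec x))"
  proof (rule sum_mono)
    fix v
    have "real_of_int (r v) * lattice_vec x $ v \<le> \<bar>real_of_int (r v)\<bar> * \<bar>lattice_vec x $ v\<bar>"
      by (metis abs_ge_self abs_mult)
    also have "\<dots> \<le> \<bar>real_of_int (r v)\<bar> * norm (lattice_vec x)"
      by (simp add: component_le_norm_cart mult_left_mono)
    finally show "real_of_int (r v) * lattice_vec x $ v \<le> \<bar>real_of_int (r v)\<bar> * norm (lattice_vec x)" .
  qed
  finally show ?thesis by (simp add: sum_distrib_right)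
qed

text \<open>By negative definiteness \<open>-2w(x) = (x,x) + \<langle>r,x\<rangle>\<close> tends to \<open>-\<infinity>\<close> quadratically,
  so the sublevel set lies in a box.\<close>

lemma finite_sublevel:
  assumes negdef: "neg_definite E m" and r: "r \<in> Char 1 E m"
  shows "finite {x. wt E m r x \<le> n}"
proof -
  obtain c where c: "c > 0" "\<forall>y. qform y \<le> - c * (norm y)\<^sup>2" using qform_neg_bound[OF negdef] by blast
  define R where "R = (\<Sum>v\<in>UNIV. \<bar>real_of_int (r v)\<bar>)"
  define B where "B = (\<bar>2 * real_of_int n\<bar> + R) / c + 1"
  have "\<bar>x v\<bar> \<le> \<lceil>B\<rceil>" if x: "wt E m r x \<le> n" for x v
  proof -
    have "- real_of_int (pair 1 E m x x) \<le> 2 * real_of_int n + real_of_int (evalk r x)"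
      using wt_double[OF r, of x] x by linarith
    then have "c * (norm (lattice_vec x))\<^sup>2 \<le> \<bar>2 * real_of_int n\<bar> + R * norm (lattice_vec x)"
      using c(2)[rule_format, of "lattice_vec x"] qform_lattice_vec[of x] evalk_le_norm[of r x]
      unfolding R_def by linarith
    then have "norm (lattice_vec x) \<le> B"
      unfolding B_def using c(1) by (intro le_of_quadratic_le) (auto simp: R_def sum_nonneg)
    moreover have "\<bar>real_of_int (x v)\<bar> \<le> norm (lattice_vec x)"
      using component_le_norm_cart[of "lattice_vec x" v] by (simp add: lattice_vec_def)
    ultimately show ?thesis by linarith
  qed
  then show ?thesis by (intro finite_subset[OF _ finite_int_box[of "\<lceil>B\<rceil>"]]) auto
qed

end

section \<open>The group \<open>\<bbbH>\<^sup>+(\<Gamma>)\<close> and the kernel of \<open>U\<close>\<close>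

lemma carrier_HPlus: "F \<in> carrier (HPlus E m) \<longleftrightarrow> (\<forall>Ob n. F (Ob, n) \<in> H0 (Sset E m (rep Ob) n))
     \<and> (\<forall>Ob n. Ob \<notin> Orbits E m \<longrightarrow> F (Ob, n) = (\<lambda>_. 0)) \<and> finite {i. F i \<noteq> (\<lambda>_. 0)}"
  by (simp add: HPlus_def)

lemma mult_HPlus: "F \<otimes>\<^bsub>HPlus E m\<^esub> G = (\<lambda>i p. F i p + G i p)"
  by (simp add: HPlus_def)

lemma one_HPlus: "\<one>\<^bsub>HPlus E m\<^esub> = (\<lambda>i p. 0)"
  by (simp add: HPlus_def)

lemma HPlus_add_closed:
  assumes "F \<in> carrier (HPlus E m)" "G \<in> carrier (HPlus E m)"
  shows "(\<lambda>i p. F i p + G i p) \<in> carrier (HPlus E m)"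
proof -
  have "{i. (\<lambda>p. F i p + G i p) \<noteq> (\<lambda>_. 0)} \<subseteq> {i. F i \<noteq> (\<lambda>_. 0)} \<union> {i. G i \<noteq> (\<lambda>_. 0)}" by auto
  then have "finite {i. (\<lambda>p. F i p + G i p) \<noteq> (\<lambda>_. 0)}"
    using assms unfolding carrier_HPlus by (meson finite_Un finite_subset)
  then show ?thesis using assms unfolding carrier_HPlus by (simp add: H0_def)
qed

lemma HPlus_uminus_closed:
  assumes "F \<in> carrier (HPlus E m)"
  shows "(\<lambda>i p. - F i p) \<in> carrier (HPlus E m)"
proof -
  have "{i. (\<lambda>p. - F i p) \<noteq> (\<lambda>_. 0)} = {i. F i \<noteq> (\<lambda>_. 0)}" by (auto simp: fun_eq_iff)
  then show ?thesis using assms unfolding carrier_HPlus by (simp add: H0_def)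
qed

lemma group_HPlus: "group (HPlus E m)"
proof (rule groupI)
  show "\<one>\<^bsub>HPlus E m\<^esub> \<in> carrier (HPlus E m)" unfolding one_HPlus carrier_HPlus by (simp add: H0_def)
next
  fix F G assume "F \<in> carrier (HPlus E m)" "G \<in> carrier (HPlus E m)"
  then show "F \<otimes>\<^bsub>HPlus E m\<^esub> G \<in> carrier (HPlus E m)" unfolding mult_HPlus by (rule HPlus_add_closed)
next
  fix F assume "F \<in> carrier (HPlus E m)"
  then show "\<exists>G\<in>carrier (HPlus E m). G \<otimes>\<^bsub>HPlus E m\<^esub> F = \<one>\<^bsub>HPlus E m\<^esub>"
    using HPlus_uminus_closed unfolding mult_HPlus one_HPlus by (intro bexI[of _ "\<lambda>i p. - F i p"]) auto
qed (simp_all add: mult_HPlus one_HPlus algebra_simps)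

lemma inv_HPlus: "F \<in> carrier (HPlus E m) \<Longrightarrow> inv\<^bsub>HPlus E m\<^esub> F = (\<lambda>i p. - F i p)"
  using group.inv_equality[OF group_HPlus[of E m], of "\<lambda>i p. - F i p" F] HPlus_uminus_closed[of F E m]
  unfolding mult_HPlus one_HPlus by simp

lemma mem_kernel_Umap:
  "F \<in> kernel (HPlus E m) (HPlus E m) (Umap E m) \<longleftrightarrow> F \<in> carrier (HPlus E m) \<and> Umap E m F = (\<lambda>i p. 0)"
  by (simp add: kernel_def one_HPlus)

lemma subgroup_kernel_Umap: "subgroup (kernel (HPlus E m) (HPlus E m) (Umap E m)) (HPlus E m)"
proof (rule group.subgroupI[OF group_HPlus])
  have "\<one>\<^bsub>HPlus E m\<^esub> \<in> kernel (HPlus E m) (HPlus E m) (Umap E m)"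
    using monoid.one_closed[OF group.is_monoid[OF group_HPlus]]
    unfolding mem_kernel_Umap one_HPlus by (auto simp: Umap_def fun_eq_iff)
  then show "kernel (HPlus E m) (HPlus E m) (Umap E m) \<noteq> {}" by blast
next
  fix F assume "F \<in> kernel (HPlus E m) (HPlus E m) (Umap E m)"
  then have F: "F \<in> carrier (HPlus E m)" and U: "Umap E m F = (\<lambda>i p. 0)" unfolding mem_kernel_Umap by auto
  have "Umap E m (\<lambda>i p. - F i p) = (\<lambda>i p. - Umap E m F i p)" by (auto simp: Umap_def fun_eq_iff)
  then show "inv\<^bsub>HPlus E m\<^esub> F \<in> kernel (HPlus E m) (HPlus E m) (Umap E m)"
    unfolding mem_kernel_Umap inv_HPlus[OF F] using HPlus_uminus_closed[OF F] U by simp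
next
  fix F G assume "F \<in> kernel (HPlus E m) (HPlus E m) (Umap E m)" "G \<in> kernel (HPlus E m) (HPlus E m) (Umap E m)"
  moreover have "Umap E m (\<lambda>i p. F i p + G i p) = (\<lambda>i p. Umap E m F i p + Umap E m G i p)"
    by (auto simp: Umap_def fun_eq_iff)
  ultimately show "F \<otimes>\<^bsub>HPlus E m\<^esub> G \<in> kernel (HPlus E m) (HPlus E m) (Umap E m)"
    unfolding mem_kernel_Umap mult_HPlus using HPlus_add_closed[of F E m G] by simp
qed (auto simp: kernel_def)

lemma mem_carrier_KerU: "F \<in> carrier (KerU E m) \<longleftrightarrow> F \<in> carrier (HPlus E m) \<and> Umap E m F = (\<lambda>i p. 0)"
  unfolding KerU_def subgroup.carrier_subgroup_generated_subgroup[OF subgroup_kernel_Umap]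
  by (rule mem_kernel_Umap)

lemma mult_KerU: "F \<otimes>\<^bsub>KerU E m\<^esub> G = (\<lambda>i p. F i p + G i p)"
  by (simp add: KerU_def subgroup_generated_def mult_HPlus)

section \<open>\<open>ker U\<close> is free on the minimal sublevel components\<close>

context neg_definite_forest
begin

lemma finite_sublevel_Orbits: "Ob \<in> Orbits E m \<Longrightarrow> finite {x. wt E m (rep Ob) x \<le> n}"
  using finite_sublevel[OF negdef Char_rep_Orbits] .

lemma MinComps_Orbits: "(Ob, n, C) \<in> MinComps \<Longrightarrow> Ob \<in> Orbits E m"
  unfolding MinComps_def by auto

lemma MinComps_wt: "(Ob, n, C) \<in> MinComps \<Longrightarrow> y \<in> C \<Longrightarrow> wt E m (rep Ob) y = n"
  unfolding MinComps_def level_component_def using component_min_wt by auto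

lemma not_MinComps_descends:
  assumes Ob: "Ob \<in> Orbits E m" and y: "wt E m (rep Ob) y \<le> n"
    and notin: "(Ob, n, level_component (rep Ob) n y) \<notin> MinComps"
  shows "\<exists>z. level_conn (rep Ob) n y z \<and> wt E m (rep Ob) z < n"
proof (cases "wt E m (rep Ob) y < n")
  case True
  then show ?thesis using level_conn_refl by blast
next
  case False
  then have n: "n = wt E m (rep Ob) y" using y by simp
  then have "\<not> component_min (rep Ob) y" using Ob notin unfolding MinComps_def by blast
  then show ?thesis unfolding component_min_def n by force
qed

text \<open>The class \<open>\<Sum> a\<^sub>t \<one>\<^sub>t\<close>, written pointwise, where \<open>\<one>\<^sub>t\<close> is the indicator of the points of \<open>S\<^sub>n\<close> whose
  floor lies in the component \<open>t\<close>.\<close>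

definition comp_class ::
    "((('v \<Rightarrow> int) set \<times> int \<times> ('v \<Rightarrow> int) set) \<Rightarrow>\<^sub>0 int) \<Rightarrow> ('v \<Rightarrow> int) set \<times> int \<Rightarrow> real^'v \<Rightarrow> int" where
  "comp_class a = (\<lambda>(Ob, n) p. if p \<in> Sset E m (rep Ob) n
      then poly_mapping.lookup a (Ob, n, level_component (rep Ob) n (lattice_floor p)) else 0)"

lemma comp_class_add: "comp_class (a + b) = (\<lambda>i p. comp_class a i p + comp_class b i p)"
  by (auto simp: comp_class_def lookup_add fun_eq_iff)

lemma comp_class_comp_point:
  assumes t: "t \<in> MinComps"
  shows "comp_class a (fst t, fst (snd t)) (lattice_vec (comp_point t)) = poly_mapping.lookup a t"
proof -
  have "lattice_vec (comp_point t) \<in> Sset E m (rep (fst t)) (fst (snd t))"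
    using lattice_vec_in_Sset comp_point(2)[OF t] by simp
  then show ?thesis using comp_point(3)[OF t, symmetric] by (simp add: comp_class_def)
qed

lemma comp_class_in_KerU:
  assumes keys: "Poly_Mapping.keys a \<subseteq> MinComps"
  shows "comp_class a \<in> carrier (KerU E m)"
proof -
  have zero: "poly_mapping.lookup a t = 0" if "t \<notin> MinComps" for t
    using keys that by (auto simp: in_keys_iff)
  have orbits: "comp_class a (Ob, n) = (\<lambda>_. 0)" if "Ob \<notin> Orbits E m" for Ob n
  proof -
    have "(Ob, n, C) \<notin> MinComps" for C using that MinComps_Orbits by blast
    then show ?thesis using zero by (auto simp: comp_class_def fun_eq_iff)
  qed
  have "comp_class a (Ob, n) \<in> H0 (Sset E m (rep Ob) n)" for Ob n
  proof (cases "Ob \<in> Orbits E m")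
    case True
    have "level_component (rep Ob) n (lattice_floor p) = level_component (rep Ob) n (lattice_floor q)"
      if "path_component (Sset E m (rep Ob) n) p q" for p q
      using path_component_imp_level_conn[OF finite_sublevel_Orbits[OF True] that] by (rule level_component_eq)
    then show ?thesis by (auto simp: H0_def comp_class_def dest: path_component_mem)
  qed (simp add: orbits H0_def)
  moreover have "{i. comp_class a i \<noteq> (\<lambda>_. 0)} \<subseteq> (\<lambda>t. (fst t, fst (snd t))) ` Poly_Mapping.keys a"
    by (force simp: comp_class_def fun_eq_iff in_keys_iff split: if_splits)
  then have "finite {i. comp_class a i \<noteq> (\<lambda>_. 0)}" by (rule finite_subset) simp
  moreover have "Umap E m (comp_class a) = (\<lambda>i p. 0)"
  proof (intro ext, clarify)
    fix Ob n p
    define T where "T = (Ob, n + 1, level_component (rep Ob) (n + 1) (lattice_floor p))"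
    have "T \<notin> MinComps" if p: "p \<in> Sset E m (rep Ob) n"
    proof
      assume "T \<in> MinComps"
      moreover have "lattice_floor p \<in> level_component (rep Ob) (n + 1) (lattice_floor p)"
        by (simp add: level_component_def level_conn_refl)
      ultimately have "wt E m (rep Ob) (lattice_floor p) = n + 1" unfolding T_def by (rule MinComps_wt)
      then show False using wt_lattice_floor_le[OF p] by simp
    qed
    then show "Umap E m (comp_class a) (Ob, n) p = 0"
      using zero by (simp add: Umap_def comp_class_def T_def)
  qed
  ultimately show ?thesis unfolding mem_carrier_KerU carrier_HPlus using orbits by blast
qed

lemma inj_on_comp_class: "inj_on comp_class (carrier FMinComps)"
proof (rule inj_onI)
  fix a b assume a: "a \<in> carrier FMinComps" and b: "b \<in> carrier FMinComps" and eq: "comp_class a = comp_class b"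
  show "a = b"
  proof (rule poly_mapping_eqI)
    fix t
    show "poly_mapping.lookup a t = poly_mapping.lookup b t"
    proof (cases "t \<in> MinComps")
      case True
      then show ?thesis using comp_class_comp_point[OF True, of a] comp_class_comp_point[OF True, of b] eq by simp
    next
      case False
      then have "t \<notin> Poly_Mapping.keys a" "t \<notin> Poly_Mapping.keys b" using a b by auto
      then show ?thesis by (simp add: in_keys_iff)
    qed
  qed
qed

text \<open>An element of \<open>ker U\<close> vanishes on every component of \<open>S\<^sub>n\<close> that meets \<open>S\<^sub>n\<^sub>-\<^sub>1\<close>.\<close>

lemma KerU_value:
  assumes F: "F \<in> carrier (KerU E m)" and p: "p \<in> Sset E m (rep Ob) n"
  defines "T \<equiv> (Ob, n, level_component (rep Ob) n (lattice_floor p))"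
  shows "F (Ob, n) p = (if T \<in> MinComps then F (Ob, n) (lattice_vec (comp_point T)) else 0)"
proof -
  have FH: "F \<in> carrier (HPlus E m)" and FU: "Umap E m F = (\<lambda>i p. 0)" using F by (auto simp: mem_carrier_KerU)
  have const: "F (Ob, n) q = F (Ob, n) q'" if "path_component (Sset E m (rep Ob) n) q q'" for q q'
    using FH that unfolding carrier_HPlus H0_def by blast
  define y where "y = lattice_floor p"
  have wy: "wt E m (rep Ob) y \<le> n" using wt_lattice_floor_le[OF p] by (simp add: y_def)
  have py: "path_component (Sset E m (rep Ob) n) p (lattice_vec y)"
    using path_component_lattice_floor[OF p] by (simp add: y_def)
  show ?thesis
  proof (cases "T \<in> MinComps")
    case True
    then have "level_conn (rep Ob) n y (comp_point T)"
      using comp_point_in_comp[OF True] by (simp add: T_def y_def level_component_def)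
    then have "path_component (Sset E m (rep Ob) n) p (lattice_vec (comp_point T))"
      using level_conn_imp_path_component[OF _ wy] py path_component_trans by blast
    then show ?thesis using True const by simp
  next
    case False
    show ?thesis
    proof (cases "Ob \<in> Orbits E m")
      case True
      then obtain z where "level_conn (rep Ob) n y z" and wz: "wt E m (rep Ob) z < n"
        using not_MinComps_descends[OF True wy] False by (auto simp: T_def y_def)
      then have "path_component (Sset E m (rep Ob) n) p (lattice_vec z)"
        using level_conn_imp_path_component[OF _ wy] py path_component_trans by blast
      moreover have "F (Ob, n) (lattice_vec z) = Umap E m F (Ob, n - 1) (lattice_vec z)"
        using lattice_vec_in_Sset[of "rep Ob" z "n - 1"] wz by (simp add: Umap_def)
      ultimately show ?thesis using False const FU by simp
    next
      case False
      then show ?thesis using FH \<open>T \<notin> MinComps\<close> unfolding carrier_HPlus by simp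
    qed
  qed
qed

lemma finite_KerU_coeffs:
  assumes F: "F \<in> carrier (HPlus E m)"
  shows "finite {t \<in> MinComps. F (fst t, fst (snd t)) (lattice_vec (comp_point t)) \<noteq> 0}"
proof (rule finite_subset)
  define SF where "SF = {i. F i \<noteq> (\<lambda>_. 0)}"
  show "{t \<in> MinComps. F (fst t, fst (snd t)) (lattice_vec (comp_point t)) \<noteq> 0}
      \<subseteq> (\<Union>i\<in>SF. (\<lambda>x. (fst i, snd i, level_component (rep (fst i)) (snd i) x)) ` {x. wt E m (rep (fst i)) x \<le> snd i})"
  proof
    fix t assume "t \<in> {t \<in> MinComps. F (fst t, fst (snd t)) (lattice_vec (comp_point t)) \<noteq> 0}"
    then have t: "t \<in> MinComps" and "(fst t, fst (snd t)) \<in> SF" by (auto simp: SF_def)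
    moreover have "t = (fst t, fst (snd t), level_component (rep (fst t)) (fst (snd t)) (comp_point t))"
      using comp_point(3)[OF t] by (cases t) simp
    moreover have "wt E m (rep (fst t)) (comp_point t) \<le> fst (snd t)"
      using comp_point(2)[OF t] by simp
    ultimately show "t \<in> (\<Union>i\<in>SF. (\<lambda>x. (fst i, snd i, level_component (rep (fst i)) (snd i) x))
        ` {x. wt E m (rep (fst i)) x \<le> snd i})" by force
  qed
  have "fst i \<in> Orbits E m" if "i \<in> SF" for i
    using that F unfolding SF_def carrier_HPlus by (cases i) auto
  moreover have "finite SF" using F unfolding carrier_HPlus SF_def by blast
  ultimately show "finite (\<Union>i\<in>SF. (\<lambda>x. (fst i, snd i, level_component (rep (fst i)) (snd i) x))
      ` {x. wt E m (rep (fst i)) x \<le> snd i})"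
    using finite_sublevel_Orbits by blast
qed

lemma comp_class_onto:
  assumes F: "F \<in> carrier (KerU E m)"
  shows "\<exists>a\<in>carrier FMinComps. comp_class a = F"
proof -
  have FH: "F \<in> carrier (HPlus E m)" using F by (simp add: mem_carrier_KerU)
  define cf where "cf t = (if t \<in> MinComps then F (fst t, fst (snd t)) (lattice_vec (comp_point t)) else 0)" for t
  define a where "a = Abs_poly_mapping cf"
  have "finite {t. cf t \<noteq> 0}"
    using finite_KerU_coeffs[OF FH] by (rule rev_finite_subset) (auto simp: cf_def split: if_splits)
  then have lookup: "poly_mapping.lookup a = cf" by (simp add: a_def)
  have "Poly_Mapping.keys a \<subseteq> MinComps"
  proof
    fix t assume "t \<in> Poly_Mapping.keys a"
    then have "cf t \<noteq> 0" by (simp add: in_keys_iff lookup)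
    then show "t \<in> MinComps" by (simp add: cf_def split: if_splits)
  qed
  then have "a \<in> carrier FMinComps" by simp
  moreover have "comp_class a (Ob, n) p = F (Ob, n) p" for Ob n p
  proof (cases "p \<in> Sset E m (rep Ob) n")
    case True
    then show ?thesis using KerU_value[OF F True] by (simp add: comp_class_def lookup cf_def)
  next
    case False
    then show ?thesis using FH unfolding carrier_HPlus H0_def by (simp add: comp_class_def)
  qed
  then have "comp_class a = F" by (intro ext) (metis surj_pair)
  ultimately show ?thesis by blast
qed

lemma FMinComps_iso_KerU: "FMinComps \<cong> KerU E m"
proof -
  have "comp_class \<in> iso FMinComps (KerU E m)"
  proof (rule isoI)
    show "comp_class \<in> hom FMinComps (KerU E m)"
      by (rule homI) (simp_all add: comp_class_in_KerU mult_KerU comp_class_add)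
    show "bij_betw comp_class (carrier FMinComps) (carrier (KerU E m))"
      unfolding bij_betw_def using inj_on_comp_class comp_class_in_KerU comp_class_onto by fastforce
  qed
  then show ?thesis by (rule is_isoI)
qed

end

theorem lemma7p3:
  fixes E :: "'v::finite \<Rightarrow> 'v \<Rightarrow> bool" and m :: "'v \<Rightarrow> int"
  assumes "plumbing_forest E" and "neg_definite E m"
  shows "HGroup E m \<cong> KerU E m"
proof -
  interpret neg_definite_forest E m
    using assms by unfold_locales
  show ?thesis using iso_trans[OF HGroup_iso_FMinComps FMinComps_iso_KerU] .
qed

end
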